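(* Let $n\ge 2$ and let $u_0,\dots,u_{n-2}$ be unitaries on $(\mathbb{C}^2)^{\otimes n}$, with $u_t$ acting on qubits $t,t+1$, and let $u_{n-1}=c\,\mathbb{1}$ with $|c|=1$. For integers $t_2\ge t_1$ set $U_{t_2:t_1}=u_{t_2-1}\cdots u_{t_1}$ (and $U_{t:t}=\mathbb{1}$). Let $|\phi\rangle$ be an eigenvector of $U_{n:0}$ with $U_{n:0}|\phi\rangle=e^{i\phi}|\phi\rangle$. Consider the Hilbert space $(\mathbb{C}^2)^{\otimes n}\otimes\mathcal{H}_{\mathrm{clock}}$, where $\mathcal{H}_{\mathrm{clock}}=\mathrm{span}\{|t\rangle: t=0,\dots,n-1\}$ is the single-excitation subspace of a chain of $n$ two-level clock sites ($|t\rangle$ = clock site $t$ occupied, all others empty), and the one-hand periodic clock Hamiltonian $$H=\mathbb{1}-\tfrac12\sum_{t=0}^{n-1}\big(u_t\otimes|t+1\rangle\langle t|+\mathrm{h.c.}\big),\qquad |n\rangle\equiv|0\rangle.$$ For $k\in\frac{2\pi}{n}\{0,1,\dots,n-1\}$ let $$|\Psi_{k,\phi}\rangle=\frac{1}{\sqrt n}\sum_{t=0}^{n-1}e^{i(k-\phi/n)t}\,U_{t:0}|\phi\rangle\otimes|t\rangle$$ (these are eigenvectors of $H$ with eigenvalues $1-\cos(k-\phi/n)$). Let $A=A_s\cup A_c$, where $A_s$ (resp. $A_c$) is the set of spin (resp. clock) sites in a cyclic interval $\{t_1,t_1+1,\dots,t_1+\ell-1\}\bmod n$ with $\ell\le n/2$.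 Suppose $C_\ell\ge 0$ is such that for every $t\in\{0,\dots,n-1\}$ and every operator $O$ supported on $A_s$ with $\|O\|_{\mathrm{op}}\le 1$, $$\Big|\langle\phi|U_{t:0}^\dagger\,O\,U_{t:0}|\phi\rangle-2^{-n}\mathrm{Tr}(O)\Big|\le C_\ell\,2^{-n/2}$$ (i.e. each $U_{t:0}|\phi\rangle$ obeys diagonal infinite-temperature ETH on $A_s$ with constant $C_\ell$). If $$\frac{\ell\ln 2}{n/2}\ \ge\ C_\ell\,2^{-n/2}+C_\ell^2\,2^{\ell-n},$$ then for every $k$ the von Neumann entanglement entropy of $|\Psi_{k,\phi}\rangle$ across $A$ satisfies $S_A(|\Psi_{k,\phi}\rangle)\ge \ell\ln 2$.
   Context: $S_A(|\Psi\rangle)=-\mathrm{Tr}(\rho_A\ln\rho_A)$ where $\rho_A$ is the reduced density matrix of $|\Psi\rangle$ on the spin sites $A_s$ together with the clock sites $A_c$ (clock sites viewed as two-level systems). The trace $\mathrm{Tr}(O)$ is over the full $n$-qubit space, with $O$ extended by the identity outside $A_s$. *)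

theory Defs
  imports Complex_Main "Jordan_Normal_Form.Char_Poly"
begin

text \<open>Conventions. An N-qubit Hilbert space is C^(2^N); the computational basis
index i < 2^N encodes qubit q in bit q of i (library predicate bit i q).\<close>

definition cadj :: "complex mat \<Rightarrow> complex mat" where
  "cadj M = mat (dim_col M) (dim_row M) (\<lambda>(i,j). cnj (M $$ (j,i)))"

definition unitary_mat :: "nat \<Rightarrow> complex mat \<Rightarrow> bool" where
  "unitary_mat d U \<longleftrightarrow> U \<in> carrier_mat d d \<and> U * cadj U = 1\<^sub>m d \<and> cadj U * U = 1\<^sub>m d"

definition cvnorm :: "complex vec \<Rightarrow> real" where
  "cvnorm v = sqrt (\<Sum>i<dim_vec v. (cmod (v $ i))\<^sup>2)"

definition cinner :: "complex vec \<Rightarrow> complex vec \<Rightarrow> complex" where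
  "cinner v w = (\<Sum>i<dim_vec v. cnj (v $ i) * w $ i)"

definition mtrace :: "complex mat \<Rightarrow> complex" where
  "mtrace M = (\<Sum>i<dim_row M. M $$ (i,i))"

definition opnorm_le1 :: "complex mat \<Rightarrow> bool" where
  "opnorm_le1 X \<longleftrightarrow> (\<forall>v. dim_vec v = dim_col X \<longrightarrow> cvnorm (X *\<^sub>v v) \<le> cvnorm v)"

text \<open>X on N qubits is supported on the qubit set S, i.e. X = O_S \<otimes> identity
outside S, written out in the computational basis.\<close>
definition supported_on :: "nat \<Rightarrow> nat set \<Rightarrow> complex mat \<Rightarrow> bool" where
  "supported_on N S X \<longleftrightarrow> X \<in> carrier_mat (2^N) (2^N) \<and>
     (\<forall>i<2^N. \<forall>j<2^N. (\<exists>q<N. q \<notin> S \<and> bit i q \<noteq> bit j q) \<longrightarrow> X $$ (i,j) = 0) \<and>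
     (\<forall>i<2^N. \<forall>j<2^N. \<forall>i'<2^N. \<forall>j'<2^N.
        (\<forall>q<N. q \<notin> S \<longrightarrow> bit i q = bit j q) \<longrightarrow>
        (\<forall>q<N. q \<notin> S \<longrightarrow> bit i' q = bit j' q) \<longrightarrow>
        (\<forall>q\<in>S. bit i q = bit i' q \<and> bit j q = bit j' q) \<longrightarrow>
        X $$ (i,j) = X $$ (i',j'))"

fun Uprod :: "nat \<Rightarrow> (nat \<Rightarrow> complex mat) \<Rightarrow> nat \<Rightarrow> complex mat" where
  "Uprod d u 0 = 1\<^sub>m d"
| "Uprod d u (Suc t) = u t * Uprod d u t"

definition embed_bits :: "nat list \<Rightarrow> nat \<Rightarrow> nat" where
  "embed_bits a r = (\<Sum>k<length a. if bit r k then 2 ^ (a ! k) else 0)"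

text \<open>Reduced density matrix of the vector psi on N qubits, on the qubit set A
(A \<subseteq> {0..<N}); the qubits of A are ordered increasingly.\<close>
definition reduced_dm :: "nat \<Rightarrow> nat set \<Rightarrow> complex vec \<Rightarrow> complex mat" where
  "reduced_dm N A psi =
    (let a = sorted_list_of_set A; b = sorted_list_of_set ({0..<N} - A) in
     mat (2 ^ length a) (2 ^ length a)
       (\<lambda>(r, r'). \<Sum>s<2 ^ length b.
           psi $ (embed_bits a r + embed_bits b s) * cnj (psi $ (embed_bits a r' + embed_bits b s))))"

text \<open>-Tr(rho ln rho), computed from the eigenvalues of rho (roots of the
characteristic polynomial, counted with algebraic multiplicity), 0 ln 0 = 0.\<close>
definition vn_entropy :: "complex mat \<Rightarrow> real" where
  "vn_entropy rho = - (\<Sum>z\<in>{z. poly (char_poly rho) z = 0}.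
      real (order z (char_poly rho)) * (if Re z > 0 then Re z * ln (Re z) else 0))"

definition ent_entropy :: "nat \<Rightarrow> nat set \<Rightarrow> complex vec \<Rightarrow> real" where
  "ent_entropy N A psi = vn_entropy (reduced_dm N A psi)"

text \<open>The state Psi_{k,phi} on 2n qubits: spin site j is qubit j, clock site t is
qubit n+t; clock state |t> has only clock site t occupied.\<close>
definition Psi_state :: "nat \<Rightarrow> (nat \<Rightarrow> complex mat) \<Rightarrow> complex vec \<Rightarrow> real \<Rightarrow> real \<Rightarrow> complex vec" where
  "Psi_state n u v k ph = vec (2 ^ (2*n)) (\<lambda>i.
     \<Sum>t<n. if i div 2^n = 2^t then
        cis ((k - ph / real n) * real t) / complex_of_real (sqrt (real n))
          * (Uprod (2^n) u t *\<^sub>v v) $ (i mod 2^n)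
      else 0)"

end

theory Submission
  imports Defs "Jordan_Normal_Form.Schur_Decomposition" "HOL-Analysis.Convex"
begin

(* The von Neumann entropy of the reduced state rho_A is at least its collision entropy
   -ln Tr rho_A^2, so it suffices to show Tr rho_A^2 <= 2^-l.  Tracing the complement of A out of
   Psi = n^(-1/2) Sum_t e^(i theta t) psi_t (x) |t>, the branches whose clock excitation lies
   outside A become an incoherent mixture, while the l branches with the excitation inside A stay
   coherent but carry pairwise orthogonal clock labels.  With Cauchy-Schwarz for the cross terms
   this gives Tr rho_A^2 <= ((n-l)^2 + l^2)/n^2 * P, where P bounds the purity of the spin state
   of every psi_t = U_{t:0}|phi> on A_s.  Testing ETH against the traceless part of that spin
   state, normalised in Frobenius norm, gives P <= 2^-l + eps^2, and the hypothesis on l makes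
   ((n-l)^2 + l^2)(1 + 2^l eps^2) <= n^2. *)

section \<open>Basis indices split along a bipartition of the qubits\<close>

definition nat_of_set :: "nat set \<Rightarrow> nat" where
  "nat_of_set S = (\<Sum>p\<in>S. 2 ^ p)"

lemma bit_nat_of_set: "finite S \<Longrightarrow> bit (nat_of_set S) q \<longleftrightarrow> q \<in> S"
proof (induction S arbitrary: q rule: finite_induct)
  case (insert x S)
  have "bit (2 ^ x + nat_of_set S) q \<longleftrightarrow> bit ((2::nat) ^ x) q \<or> bit (nat_of_set S) q"
    by (rule bit_disjunctive_add_iff) (use insert in \<open>auto simp: bit_exp_iff\<close>)
  then show ?case
    using insert by (auto simp: nat_of_set_def bit_exp_iff)
qed (simp add: nat_of_set_def)

lemma less_exp_if_bits_less: "(\<And>k. bit (i::nat) k \<Longrightarrow> k < m) \<Longrightarrow> i < 2 ^ m"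
proof -
  assume "\<And>k. bit i k \<Longrightarrow> k < m"
  then have "take_bit m i = i"
    by (intro bit_eqI) (auto simp: bit_take_bit_iff)
  then show ?thesis
    by (metis take_bit_nat_less_exp)
qed

lemma bit_imp_less_if_less_exp: "(i::nat) < 2 ^ m \<Longrightarrow> bit i k \<Longrightarrow> k < m"
  by (metis bit_take_bit_iff take_bit_nat_eq_self_iff)

lemma bit_embed_bits:
  assumes "distinct xs"
  shows "bit (embed_bits xs r) q \<longleftrightarrow> (\<exists>k<length xs. xs ! k = q \<and> bit r k)"
proof -
  have "embed_bits xs r = (\<Sum>k\<in>{k. k < length xs \<and> bit r k}. 2 ^ (xs ! k))"
    unfolding embed_bits_def by (rule sum.mono_neutral_cong_right) auto
  also have "\<dots> = nat_of_set ((!) xs ` {k. k < length xs \<and> bit r k})"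
    unfolding nat_of_set_def
    by (rule sum.reindex[symmetric, unfolded comp_def])
      (use assms in \<open>auto simp: inj_on_def nth_eq_iff_index_eq\<close>)
  finally show ?thesis
    by (auto simp: bit_nat_of_set)
qed

definition extract_bits :: "nat list \<Rightarrow> nat \<Rightarrow> nat" where
  "extract_bits xs i = nat_of_set {k. k < length xs \<and> bit i (xs ! k)}"

lemma bit_extract_bits: "bit (extract_bits xs i) k \<longleftrightarrow> k < length xs \<and> bit i (xs ! k)"
  by (simp add: extract_bits_def bit_nat_of_set)

lemma extract_bits_less: "extract_bits xs i < 2 ^ length xs"
  by (rule less_exp_if_bits_less) (simp add: bit_extract_bits)

lemma extract_bits_cong:
  "(\<And>q. q \<in> set xs \<Longrightarrow> bit i q = bit j q) \<Longrightarrow> extract_bits xs i = extract_bits xs j"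
  unfolding extract_bits_def by (simp cong: conj_cong)

lemma extract_embed_bits:
  assumes "distinct xs" and "r < 2 ^ length xs"
  shows "extract_bits xs (embed_bits xs r) = r"
proof (rule bit_eqI)
  fix k
  show "bit (extract_bits xs (embed_bits xs r)) k \<longleftrightarrow> bit r k"
    using assms bit_imp_less_if_less_exp[OF assms(2)]
    by (auto simp: bit_extract_bits bit_embed_bits nth_eq_iff_index_eq)
qed

lemma extract_bits_exp_eq_0: "t \<notin> set xs \<Longrightarrow> extract_bits xs (2 ^ t) = 0"
  by (rule bit_eqI) (auto simp: bit_extract_bits bit_exp_iff)

lemma bit_extract_bits_exp: "k < length xs \<Longrightarrow> bit (extract_bits xs (2 ^ t)) k \<longleftrightarrow> xs ! k = t"
  by (auto simp: bit_extract_bits bit_exp_iff)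

lemma extract_bits_exp_neq_0: "t \<in> set xs \<Longrightarrow> extract_bits xs (2 ^ t) \<noteq> 0"
proof -
  assume "t \<in> set xs"
  then obtain k where "k < length xs" "xs ! k = t"
    by (auto simp: in_set_conv_nth)
  then have "bit (extract_bits xs (2 ^ t)) k"
    by (simp add: bit_extract_bits_exp)
  then show ?thesis
    by (cases "extract_bits xs (2 ^ t) = 0") simp_all
qed

lemma extract_bits_exp_inj:
  "t \<in> set xs \<Longrightarrow> extract_bits xs (2 ^ t) = extract_bits xs (2 ^ t') \<Longrightarrow> t = t'"
proof -
  assume t: "t \<in> set xs" and eq: "extract_bits xs (2 ^ t) = extract_bits xs (2 ^ t')"
  then obtain k where k: "k < length xs" "xs ! k = t"
    by (auto simp: in_set_conv_nth)
  then have "bit (extract_bits xs (2 ^ t')) k"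
    using eq by (simp flip: eq add: bit_extract_bits_exp)
  then show ?thesis
    using k by (simp add: bit_extract_bits_exp)
qed

locale qubit_partition =
  fixes xs ys :: "nat list" and N :: nat
  assumes distinct_xs: "distinct xs" and distinct_ys: "distinct ys"
    and disjoint: "set xs \<inter> set ys = {}" and cover: "set xs \<union> set ys = {..<N}"
begin

definition join :: "nat \<Rightarrow> nat \<Rightarrow> nat" where
  "join r s = embed_bits xs r + embed_bits ys s"

lemma bit_join: "bit (join r s) q \<longleftrightarrow> bit (embed_bits xs r) q \<or> bit (embed_bits ys s) q"
  unfolding join_def
  by (rule bit_disjunctive_add_iff)
    (use disjoint in \<open>auto simp: bit_embed_bits distinct_xs distinct_ys dest!: nth_mem\<close>)

lemma join_less: "join r s < 2 ^ N"
proof (rule less_exp_if_bits_less)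
  fix k
  assume "bit (join r s) k"
  then have "k \<in> set xs \<union> set ys"
    by (auto simp: bit_join bit_embed_bits distinct_xs distinct_ys)
  then show "k < N"
    using cover by auto
qed

lemma extract_join_left: "r < 2 ^ length xs \<Longrightarrow> extract_bits xs (join r s) = r"
proof -
  assume r: "r < 2 ^ length xs"
  have "extract_bits xs (join r s) = extract_bits xs (embed_bits xs r)"
    using disjoint
    by (intro extract_bits_cong) (auto simp: bit_join bit_embed_bits distinct_ys dest: nth_mem)
  then show ?thesis
    using extract_embed_bits[OF distinct_xs r] by simp
qed

lemma extract_join_right: "s < 2 ^ length ys \<Longrightarrow> extract_bits ys (join r s) = s"
proof -
  assume s: "s < 2 ^ length ys"
  have "extract_bits ys (join r s) = extract_bits ys (embed_bits ys s)"
    using disjoint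
    by (intro extract_bits_cong) (auto simp: bit_join bit_embed_bits distinct_xs dest: nth_mem)
  then show ?thesis
    using extract_embed_bits[OF distinct_ys s] by simp
qed

lemma join_extract: "i < 2 ^ N \<Longrightarrow> join (extract_bits xs i) (extract_bits ys i) = i"
proof (rule bit_eqI)
  fix q
  assume i: "i < 2 ^ N"
  show "bit (join (extract_bits xs i) (extract_bits ys i)) q \<longleftrightarrow> bit i q"
  proof
    assume "bit i q"
    then have "q \<in> set xs \<or> q \<in> set ys"
      using cover bit_imp_less_if_less_exp[OF i] by auto
    then show "bit (join (extract_bits xs i) (extract_bits ys i)) q"
      using \<open>bit i q\<close>
      by (auto simp: bit_join bit_embed_bits distinct_xs distinct_ys bit_extract_bits
          in_set_conv_nth)
  qed (auto simp: bit_join bit_embed_bits distinct_xs distinct_ys bit_extract_bits)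
qed

lemma join_eq_iff:
  assumes "i < 2 ^ N" "r < 2 ^ length xs" "s < 2 ^ length ys"
  shows "join r s = i \<longleftrightarrow> r = extract_bits xs i \<and> s = extract_bits ys i"
proof
  assume "join r s = i"
  then show "r = extract_bits xs i \<and> s = extract_bits ys i"
    using extract_join_left[OF assms(2)] extract_join_right[OF assms(3)] by auto
qed (use join_extract[OF assms(1)] in auto)

lemma bij_betw_join:
  "bij_betw (\<lambda>(r, s). join r s) ({..<2 ^ length xs} \<times> {..<2 ^ length ys}) {..<2 ^ N}"
  by (rule bij_betw_byWitness[where f' = "\<lambda>i. (extract_bits xs i, extract_bits ys i)"])
    (auto simp: extract_join_left extract_join_right join_extract join_less extract_bits_less)

lemma sum_join: "(\<Sum>i<2 ^ N. f i) = (\<Sum>r<2 ^ length xs. \<Sum>s<2 ^ length ys. f (join r s))"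
  by (simp add: sum.reindex_bij_betw[OF bij_betw_join, symmetric] sum.cartesian_product
      split_def)

end


section \<open>Von Neumann entropy and purity\<close>

lemma mtrace_mult_comm:
  assumes "A \<in> carrier_mat d e" and "B \<in> carrier_mat e d"
  shows "mtrace (A * B) = mtrace (B * A)"
proof -
  have "mtrace (A * B) = (\<Sum>i<d. \<Sum>k<e. A $$ (i, k) * B $$ (k, i))"
    unfolding mtrace_def using assms by (simp add: scalar_prod_def atLeast0LessThan)
  also have "\<dots> = (\<Sum>k<e. \<Sum>i<d. B $$ (k, i) * A $$ (i, k))"
    by (subst sum.swap) (simp add: mult.commute)
  also have "\<dots> = mtrace (B * A)"
    unfolding mtrace_def using assms by (simp add: scalar_prod_def atLeast0LessThan)
  finally show ?thesis .
qed

lemma mtrace_similar: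
  assumes "similar_mat_wit R B P Q" and "X \<in> carrier_mat d d" and "R \<in> carrier_mat d d"
  shows "mtrace (P * X * Q) = mtrace X"
proof -
  have P: "P \<in> carrier_mat d d" and Q: "Q \<in> carrier_mat d d" and QP: "Q * P = 1\<^sub>m d"
    using assms unfolding similar_mat_wit_def Let_def by auto
  have "mtrace (P * X * Q) = mtrace (Q * (P * X))"
    using P Q assms(2) by (intro mtrace_mult_comm[of _ d d]) auto
  also have "Q * (P * X) = X"
    using P Q QP assms(2) by (simp flip: assoc_mult_mat)
  finally show ?thesis .
qed

lemma mtrace_upper_triangular_square:
  assumes "B \<in> carrier_mat d d" and "upper_triangular B"
  shows "mtrace (B * B) = (\<Sum>i<d. (B $$ (i, i))\<^sup>2)"
proof -
  have off_diag: "B $$ (i, k) * B $$ (k, i) = 0" if "i < d" "k < d" "k \<noteq> i" for i k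
    using assms that unfolding upper_triangular_def by (cases "k < i") auto
  have "(\<Sum>k<d. B $$ (i, k) * B $$ (k, i)) = (B $$ (i, i))\<^sup>2" if i: "i < d" for i
  proof -
    have "(\<Sum>k\<in>{..<d} - {i}. B $$ (i, k) * B $$ (k, i)) = 0"
      using off_diag i by (intro sum.neutral) auto
    then show ?thesis
      using i by (simp add: sum.remove[of "{..<d}" i] power2_eq_square)
  qed
  then show ?thesis
    unfolding mtrace_def using assms by (simp add: scalar_prod_def atLeast0LessThan)
qed

lemma mtrace_eq_sum_eigenvalues:
  assumes R: "R \<in> carrier_mat d d" and cp: "char_poly R = (\<Prod>a\<leftarrow>as. [:- a, 1:])"
  shows "mtrace R = sum_list as" and "mtrace (R * R) = sum_list (map (\<lambda>a. a\<^sup>2) as)"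
proof -
  obtain B P Q where sd: "schur_decomposition R as = (B, P, Q)"
    by (cases "schur_decomposition R as") auto
  from schur_decomposition[OF R cp sd] have sim: "similar_mat_wit R B P Q"
    and ut: "upper_triangular B" and diag: "diag_mat B = as" by auto
  have B: "B \<in> carrier_mat d d" and P: "P \<in> carrier_mat d d" and Q: "Q \<in> carrier_mat d d"
    and QP: "Q * P = 1\<^sub>m d" and RPBQ: "R = P * B * Q"
    using sim R unfolding similar_mat_wit_def Let_def by auto
  have as: "as = map (\<lambda>i. B $$ (i, i)) [0..<d]"
    using diag B by (auto simp: diag_mat_def)
  have "R * R = P * B * (Q * P) * B * Q"
    unfolding RPBQ using P B Q by (simp add: assoc_mult_mat[of _ d d _ d _ d])
  also have "\<dots> = P * (B * B) * Q"
    using QP P B Q by (simp add: assoc_mult_mat[of _ d d _ d _ d])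
  finally have "R * R = P * (B * B) * Q" .
  then have "mtrace (R * R) = mtrace (B * B)"
    using mtrace_similar[OF sim _ R] B by simp
  also have "\<dots> = sum_list (map (\<lambda>a. a\<^sup>2) as)"
    using mtrace_upper_triangular_square[OF B ut] as by (simp add: sum_list_sum_nth atLeast0LessThan)
  finally show "mtrace (R * R) = sum_list (map (\<lambda>a. a\<^sup>2) as)" .
  have "mtrace R = mtrace B"
    using mtrace_similar[OF sim B R] RPBQ by simp
  also have "\<dots> = sum_list as"
    using B as by (simp add: mtrace_def sum_list_sum_nth atLeast0LessThan)
  finally show "mtrace R = sum_list as" .
qed

lemma order_prod_linear_factors:
  "Polynomial.order z (\<Prod>a\<leftarrow>as. [:- a, 1:]) = count_list as (z::complex)"
proof (induction as)
  case (Cons a as)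
  have "(\<Prod>a\<leftarrow>as. [:- a, 1:]) \<noteq> 0"
    by (auto simp: prod_list_zero_iff)
  then have "[:- a, 1:] * (\<Prod>a\<leftarrow>as. [:- a, 1:]) \<noteq> 0"
    by (intro no_zero_divisors) simp_all
  then have "Polynomial.order z (\<Prod>a\<leftarrow>a # as. [:- a, 1:])
      = Polynomial.order z [:- a, 1:] + Polynomial.order z (\<Prod>a\<leftarrow>as. [:- a, 1:])"
    by (simp only: list.map prod_list.Cons) (rule order_mult)
  then show ?case
    using Cons by (simp add: order_linear')
qed (simp add: order_0I)

lemma sum_list_map_eq_sum_count_of_nat:
  fixes f :: "'a \<Rightarrow> 'b::comm_semiring_1"
  shows "sum_list (map f xs) = (\<Sum>x\<in>set xs. of_nat (count_list xs x) * f x)"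
proof (induction xs)
  case (Cons x xs)
  have "(\<Sum>z\<in>set (x # xs). of_nat (count_list (x # xs) z) * f z)
      = (\<Sum>z\<in>insert x (set xs). of_nat (count_list xs z) * f z + (if x = z then f z else 0))"
    by (intro sum.cong) (auto simp: algebra_simps)
  also have "\<dots> = (\<Sum>z\<in>insert x (set xs). of_nat (count_list xs z) * f z) + f x"
    by (simp add: sum.distrib)
  also have "(\<Sum>z\<in>insert x (set xs). of_nat (count_list xs z) * f z)
      = (\<Sum>z\<in>set xs. of_nat (count_list xs z) * f z)"
    by (rule sum.mono_neutral_right) (auto simp: count_list_0_iff)
  finally show ?case
    using Cons by (simp add: add.commute)
qed simp

lemma vn_entropy_eq_sum_eigenvalues:
  assumes "char_poly R = (\<Prod>a\<leftarrow>as. [:- a, 1:])"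
  shows "vn_entropy R = - sum_list (map (\<lambda>z. if Re z > 0 then Re z * ln (Re z) else 0) as)"
proof -
  have "{z. poly (char_poly R) z = 0} = set as"
    using assms by (auto simp: poly_prod_list_zero_iff)
  then show ?thesis
    unfolding vn_entropy_def using assms
    by (simp add: order_prod_linear_factors sum_list_map_eq_sum_count_of_nat)
qed

lemma gram_eigenvalue_nonneg:
  fixes M :: "nat \<Rightarrow> nat \<Rightarrow> complex"
  assumes R: "R = mat d d (\<lambda>(r, r'). \<Sum>s<D. M r s * cnj (M r' s))" and ev: "eigenvalue R a"
  shows "Im a = 0" and "Re a \<ge> 0"
proof -
  obtain v where v: "v \<in> carrier_vec d" "v \<noteq> 0\<^sub>v d" "R *\<^sub>v v = a \<cdot>\<^sub>v v"
    using ev R unfolding eigenvalue_def eigenvector_def by auto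
  define z where "z s = (\<Sum>r<d. cnj (v $ r) * M r s)" for s
  define V where "V = (\<Sum>r<d. (cmod (v $ r))\<^sup>2)"
  define W where "W = (\<Sum>s<D. (cmod (z s))\<^sup>2)"
  have "(\<Sum>r<d. cnj (v $ r) * (R *\<^sub>v v) $ r)
      = (\<Sum>r<d. \<Sum>r'<d. \<Sum>s<D. cnj (v $ r) * M r s * (cnj (M r' s) * v $ r'))"
    using v(1) R
    by (simp add: mult_mat_vec_def scalar_prod_def atLeast0LessThan sum_distrib_left
        sum_distrib_right mult_ac)
  also have "\<dots> = (\<Sum>s<D. \<Sum>r<d. \<Sum>r'<d. cnj (v $ r) * M r s * (cnj (M r' s) * v $ r'))"
    by (simp only: sum.swap[of _ "{..<d}" "{..<D}"])
  also have "\<dots> = (\<Sum>s<D. z s * cnj (z s))"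
    unfolding z_def by (simp add: sum_product mult_ac)
  also have "\<dots> = complex_of_real W"
    unfolding W_def of_real_sum complex_norm_square ..
  finally have "a * complex_of_real V = complex_of_real W"
    using v unfolding V_def of_real_sum complex_norm_square
    by (simp add: sum_distrib_left mult_ac)
  moreover have "V > 0"
  proof -
    have "\<exists>r<d. v $ r \<noteq> 0"
    proof (rule ccontr)
      assume "\<not> (\<exists>r<d. v $ r \<noteq> 0)"
      then have "v = 0\<^sub>v d"
        using v(1) by (intro eq_vecI) auto
      with v(2) show False
        by simp
    qed
    then obtain r where "r < d" "v $ r \<noteq> 0"
      by blast
    then show ?thesis
      unfolding V_def by (intro sum_pos2[of _ r]) auto
  qed
  ultimately have "a = complex_of_real W / complex_of_real V"
    by (simp add: eq_divide_eq)
  then have "a = complex_of_real (W / V)"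
    by simp
  moreover have "W / V \<ge> 0"
    unfolding W_def V_def by (intro divide_nonneg_nonneg sum_nonneg) auto
  ultimately show "Im a = 0" and "Re a \<ge> 0"
    by simp_all
qed

lemma sum_xlnx_le_ln_sum_squares:
  fixes p :: "nat \<Rightarrow> real"
  assumes nonneg: "\<And>i. i < d \<Longrightarrow> p i \<ge> 0" and sum1: "(\<Sum>i<d. p i) = 1"
  shows "(\<Sum>i<d. if p i > 0 then p i * ln (p i) else 0) \<le> ln (\<Sum>i<d. (p i)\<^sup>2)"
proof -
  define Q where "Q = (\<Sum>i<d. (p i)\<^sup>2)"
  have "\<exists>j<d. p j > 0"
  proof (rule ccontr)
    assume "\<not> (\<exists>j<d. p j > 0)"
    then have "\<forall>i<d. p i = 0"
      using nonneg by (meson not_less order_antisym)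
    then show False
      using sum1 by simp
  qed
  then obtain j where j: "j < d" "p j > 0"
    by blast
  have Q: "Q > 0"
    unfolding Q_def using j by (intro sum_pos2[of _ j]) auto
  have "(\<Sum>i<d. if p i > 0 then p i * ln (p i) else 0) - ln Q
      = (\<Sum>i<d. (if p i > 0 then p i * ln (p i) else 0) - p i * ln Q)"
    by (simp add: sum_subtractf sum_distrib_right[symmetric] sum1)
  also have "\<dots> \<le> (\<Sum>i<d. (p i)\<^sup>2 / Q - p i)"
  proof (rule sum_mono)
    fix i
    assume i: "i \<in> {..<d}"
    show "(if p i > 0 then p i * ln (p i) else 0) - p i * ln Q \<le> (p i)\<^sup>2 / Q - p i"
    proof (cases "p i > 0")
      case True
      have "p i * ln (p i / Q) \<le> p i * (p i / Q - 1)"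
        using True Q by (intro mult_left_mono ln_le_minus_one) auto
      then show ?thesis
        using True Q by (simp add: ln_div algebra_simps power2_eq_square)
    next
      case False
      then have "p i = 0"
        using nonneg i by (meson lessThan_iff not_less order_antisym)
      then show ?thesis
        by simp
    qed
  qed
  also have "\<dots> = 0"
    using Q sum1 by (simp add: sum_subtractf sum_divide_distrib[symmetric] Q_def)
  finally show ?thesis
    unfolding Q_def by simp
qed

definition purity :: "complex mat \<Rightarrow> real" where
  "purity M = (\<Sum>r<dim_row M. \<Sum>r'<dim_col M. (cmod (M $$ (r, r')))\<^sup>2)"

lemma mtrace_square_hermitian:
  assumes "R \<in> carrier_mat d d" and "\<And>r r'. r < d \<Longrightarrow> r' < d \<Longrightarrow> R $$ (r', r) = cnj (R $$ (r, r'))"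
  shows "mtrace (R * R) = complex_of_real (purity R)"
proof -
  have "mtrace (R * R) = (\<Sum>r<d. \<Sum>r'<d. R $$ (r, r') * R $$ (r', r))"
    unfolding mtrace_def using assms(1) by (simp add: scalar_prod_def atLeast0LessThan)
  also have "\<dots> = (\<Sum>r<d. \<Sum>r'<d. complex_of_real ((cmod (R $$ (r, r')))\<^sup>2))"
  proof (intro sum.cong refl)
    fix r r'
    assume "r \<in> {..<d}" "r' \<in> {..<d}"
    then show "R $$ (r, r') * R $$ (r', r) = complex_of_real ((cmod (R $$ (r, r')))\<^sup>2)"
      using assms(2)[of r r'] unfolding complex_norm_square by simp
  qed
  finally show ?thesis
    using assms(1) by (simp add: purity_def of_real_sum)
qed

lemma vn_entropy_ge_neg_ln_purity:
  fixes M :: "nat \<Rightarrow> nat \<Rightarrow> complex"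
  assumes R: "R = mat d d (\<lambda>(r, r'). \<Sum>s<D. M r s * cnj (M r' s))" and tr: "mtrace R = 1"
  shows "vn_entropy R \<ge> - ln (purity R)"
proof -
  have Rc: "R \<in> carrier_mat d d"
    using R by simp
  obtain as where cp: "char_poly R = (\<Prod>a\<leftarrow>as. [:- a, 1:])" and len: "length as = d"
    using char_poly_factorized[OF Rc] by blast
  have ev: "eigenvalue R (as ! i)" if "i < d" for i
    using that len eigenvalue_root_char_poly[OF Rc]
    by (simp add: cp poly_prod_list_zero_iff)
  define p where "p i = Re (as ! i)" for i
  have as: "as ! i = complex_of_real (p i)" and p: "p i \<ge> 0" if "i < d" for i
    using gram_eigenvalue_nonneg[OF R ev[OF that]] by (auto simp: p_def complex_eq_iff)
  have "complex_of_real (\<Sum>i<d. p i) = 1"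
    using mtrace_eq_sum_eigenvalues(1)[OF Rc cp] tr len as
    by (simp add: sum_list_sum_nth atLeast0LessThan)
  then have sum1: "(\<Sum>i<d. p i) = 1"
    by (metis of_real_eq_1_iff)
  have herm: "R $$ (r', r) = cnj (R $$ (r, r'))" if "r < d" "r' < d" for r r'
    using that R by (simp add: mult.commute)
  have "complex_of_real (\<Sum>i<d. (p i)\<^sup>2) = complex_of_real (purity R)"
    using mtrace_eq_sum_eigenvalues(2)[OF Rc cp] mtrace_square_hermitian[OF Rc herm] len as
    by (simp add: sum_list_sum_nth atLeast0LessThan)
  then have "(\<Sum>i<d. (p i)\<^sup>2) = purity R"
    by (metis of_real_eq_iff)
  moreover have "vn_entropy R = - (\<Sum>i<d. if p i > 0 then p i * ln (p i) else 0)"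
    unfolding vn_entropy_eq_sum_eigenvalues[OF cp] p_def using len
    by (simp add: sum_list_sum_nth atLeast0LessThan)
  ultimately show ?thesis
    using sum_xlnx_le_ln_sum_squares[OF p sum1] by simp
qed

section \<open>ETH bounds the purity of a reduced state\<close>

lemma cmod_sum_mult_sq_le:
  fixes x y :: "'a \<Rightarrow> complex"
  shows "(cmod (\<Sum>i\<in>I. x i * y i))\<^sup>2 \<le> (\<Sum>i\<in>I. (cmod (x i))\<^sup>2) * (\<Sum>i\<in>I. (cmod (y i))\<^sup>2)"
proof -
  have "cmod (\<Sum>i\<in>I. x i * y i) \<le> (\<Sum>i\<in>I. cmod (x i) * cmod (y i))"
    by (rule order_trans[OF norm_sum]) (simp add: norm_mult)
  then have "(cmod (\<Sum>i\<in>I. x i * y i))\<^sup>2 \<le> (\<Sum>i\<in>I. cmod (x i) * cmod (y i))\<^sup>2"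
    by (rule power_mono) simp
  also have "\<dots> \<le> (\<Sum>i\<in>I. (cmod (x i))\<^sup>2) * (\<Sum>i\<in>I. (cmod (y i))\<^sup>2)"
    by (rule Cauchy_Schwarz_ineq_sum)
  finally show ?thesis .
qed

context qubit_partition
begin

definition reduced :: "complex vec \<Rightarrow> complex mat" where
  "reduced \<psi> = mat (2 ^ length xs) (2 ^ length xs)
     (\<lambda>(r, r'). \<Sum>s<2 ^ length ys. \<psi> $ join r s * cnj (\<psi> $ join r' s))"

lemma mtrace_reduced: "mtrace (reduced \<psi>) = complex_of_real (\<Sum>i<2 ^ N. (cmod (\<psi> $ i))\<^sup>2)"
  unfolding mtrace_def reduced_def of_real_sum complex_norm_square sum_join by simp

text \<open>\<open>lift D\<close> is \<open>D \<otimes> 1\<close> in the tensor factorisation given by \<open>join\<close>.\<close>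

definition lift :: "(nat \<Rightarrow> nat \<Rightarrow> complex) \<Rightarrow> complex mat" where
  "lift D = mat (2 ^ N) (2 ^ N) (\<lambda>(i, j).
     if extract_bits ys i = extract_bits ys j then D (extract_bits xs i) (extract_bits xs j) else 0)"

lemma lift_join:
  assumes "r < 2 ^ length xs" "s < 2 ^ length ys" "r' < 2 ^ length xs" "s' < 2 ^ length ys"
  shows "lift D $$ (join r s, join r' s') = (if s = s' then D r r' else 0)"
  using assms join_less by (simp add: lift_def extract_join_left extract_join_right)

lemma lift_mult_vec_join:
  assumes "dim_vec w = 2 ^ N" "r < 2 ^ length xs" "s < 2 ^ length ys"
  shows "(lift D *\<^sub>v w) $ join r s = (\<Sum>r'<2 ^ length xs. D r r' * w $ join r' s)"
proof -
  have "(lift D *\<^sub>v w) $ join r s = (\<Sum>j<2 ^ N. lift D $$ (join r s, j) * w $ j)"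
    using assms join_less by (simp add: lift_def scalar_prod_def atLeast0LessThan)
  also have "\<dots> = (\<Sum>r'<2 ^ length xs. \<Sum>s'<2 ^ length ys.
      lift D $$ (join r s, join r' s') * w $ join r' s')"
    by (rule sum_join)
  also have "\<dots> = (\<Sum>r'<2 ^ length xs. D r r' * w $ join r' s)"
  proof (rule sum.cong[OF refl])
    fix r' :: nat
    assume r': "r' \<in> {..<2 ^ length xs}"
    have "(\<Sum>s'<2 ^ length ys. lift D $$ (join r s, join r' s') * w $ join r' s')
        = (\<Sum>s'<2 ^ length ys. if s' = s then D r r' * w $ join r' s else 0)"
      using assms r' by (intro sum.cong refl) (auto simp: lift_join)
    then show "(\<Sum>s'<2 ^ length ys. lift D $$ (join r s, join r' s') * w $ join r' s')
        = D r r' * w $ join r' s"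
      using assms by simp
  qed
  finally show ?thesis .
qed

lemma mtrace_lift: "mtrace (lift D) = of_nat (2 ^ length ys) * (\<Sum>r<2 ^ length xs. D r r)"
proof -
  have "mtrace (lift D) = (\<Sum>i<2 ^ N. lift D $$ (i, i))"
    by (simp add: mtrace_def lift_def)
  also have "\<dots> = (\<Sum>r<2 ^ length xs. \<Sum>s<2 ^ length ys. lift D $$ (join r s, join r s))"
    by (rule sum_join)
  also have "\<dots> = (\<Sum>r<2 ^ length xs. \<Sum>(s::nat)<2 ^ length ys. D r r)"
    by (intro sum.cong refl) (simp add: lift_join)
  finally show ?thesis
    by (simp add: sum_distrib_left)
qed

lemma supported_on_lift: "supported_on N (set xs) (lift D)"
  unfolding supported_on_def
proof (intro conjI allI impI)
  fix i j :: nat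
  assume ij: "i < 2 ^ N" "j < 2 ^ N" and "\<exists>q<N. q \<notin> set xs \<and> bit i q \<noteq> bit j q"
  then obtain q where "q < N" "q \<notin> set xs" "bit i q \<noteq> bit j q"
    by blast
  moreover from this obtain k where "k < length ys" "ys ! k = q"
    using cover by (metis UnE in_set_conv_nth lessThan_iff)
  ultimately have "bit (extract_bits ys i) k \<noteq> bit (extract_bits ys j) k"
    by (simp add: bit_extract_bits)
  then show "lift D $$ (i, j) = 0"
    using ij by (auto simp: lift_def)
next
  fix i j i' j' :: nat
  assume "i < 2 ^ N" "j < 2 ^ N" "i' < 2 ^ N" "j' < 2 ^ N"
    and "\<forall>q<N. q \<notin> set xs \<longrightarrow> bit i q = bit j q"
    and "\<forall>q<N. q \<notin> set xs \<longrightarrow> bit i' q = bit j' q"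
    and "\<forall>q\<in>set xs. bit i q = bit i' q \<and> bit j q = bit j' q"
  moreover have "q < N \<and> q \<notin> set xs" if "q \<in> set ys" for q
    using that cover disjoint by auto
  ultimately have "extract_bits ys i = extract_bits ys j" "extract_bits ys i' = extract_bits ys j'"
    "extract_bits xs i = extract_bits xs i'" "extract_bits xs j = extract_bits xs j'"
    by (auto intro!: extract_bits_cong)
  then show "lift D $$ (i, j) = lift D $$ (i', j')"
    using \<open>i < 2 ^ N\<close> \<open>j < 2 ^ N\<close> \<open>i' < 2 ^ N\<close> \<open>j' < 2 ^ N\<close> by (simp add: lift_def)
qed (simp add: lift_def)

lemma opnorm_le1_lift:
  assumes D: "(\<Sum>r<2 ^ length xs. \<Sum>r'<2 ^ length xs. (cmod (D r r'))\<^sup>2) = 1"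
  shows "opnorm_le1 (lift D)"
  unfolding opnorm_le1_def
proof (intro allI impI)
  fix w :: "complex vec"
  assume "dim_vec w = dim_col (lift D)"
  then have w: "dim_vec w = 2 ^ N"
    by (simp add: lift_def)
  let ?R = "2 ^ length xs" and ?S = "2 ^ length ys"
  have "(\<Sum>i<dim_vec (lift D *\<^sub>v w). (cmod ((lift D *\<^sub>v w) $ i))\<^sup>2)
      = (\<Sum>r<?R. \<Sum>s<?S. (cmod ((lift D *\<^sub>v w) $ join r s))\<^sup>2)"
  proof -
    have "dim_vec (lift D *\<^sub>v w) = 2 ^ N"
      by (simp add: lift_def)
    then show ?thesis
      by (simp only: sum_join)
  qed
  also have "\<dots> = (\<Sum>r<?R. \<Sum>s<?S. (cmod (\<Sum>r'<?R. D r r' * w $ join r' s))\<^sup>2)"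
    by (simp add: lift_mult_vec_join[OF w])
  also have "\<dots> \<le> (\<Sum>r<?R. \<Sum>s<?S. (\<Sum>r'<?R. (cmod (D r r'))\<^sup>2) * (\<Sum>r'<?R. (cmod (w $ join r' s))\<^sup>2))"
    by (intro sum_mono cmod_sum_mult_sq_le)
  also have "\<dots> = (\<Sum>r'<?R. \<Sum>s<?S. (cmod (w $ join r' s))\<^sup>2)"
    by (simp add: sum_product[symmetric] D sum.swap[of _ "{..<?S}"])
  also have "\<dots> = (\<Sum>i<dim_vec w. (cmod (w $ i))\<^sup>2)"
    by (simp add: w sum_join)
  finally show "cvnorm (lift D *\<^sub>v w) \<le> cvnorm w"
    unfolding cvnorm_def by (rule real_sqrt_le_mono)
qed

lemma cinner_lift:
  assumes "dim_vec \<psi> = 2 ^ N"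
  shows "cinner \<psi> (lift D *\<^sub>v \<psi>) = (\<Sum>r<2 ^ length xs. \<Sum>r'<2 ^ length xs. D r r' * reduced \<psi> $$ (r', r))"
proof -
  have "cinner \<psi> (lift D *\<^sub>v \<psi>)
      = (\<Sum>r<2 ^ length xs. \<Sum>s<2 ^ length ys. cnj (\<psi> $ join r s) * (lift D *\<^sub>v \<psi>) $ join r s)"
    unfolding cinner_def assms by (rule sum_join)
  also have "\<dots> = (\<Sum>r<2 ^ length xs. \<Sum>s<2 ^ length ys. \<Sum>r'<2 ^ length xs.
      D r r' * (\<psi> $ join r' s * cnj (\<psi> $ join r s)))"
    by (simp add: lift_mult_vec_join[OF assms] sum_distrib_left mult_ac)
  also have "\<dots> = (\<Sum>r<2 ^ length xs. \<Sum>r'<2 ^ length xs. D r r' * reduced \<psi> $$ (r', r))"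
    by (simp add: reduced_def sum_distrib_left sum.swap[of _ "{..<2 ^ length ys}"])
  finally show ?thesis .
qed

end

lemma cmod_add_of_real_sq: "(cmod (z + complex_of_real a))\<^sup>2 = (cmod z)\<^sup>2 + 2 * a * Re z + a\<^sup>2"
  unfolding cmod_power2 by (simp add: power2_eq_square algebra_simps)

lemma sum_cmod_sq_eq_traceless_part:
  fixes X :: "nat \<Rightarrow> nat \<Rightarrow> complex"
  assumes R: "R > 0" and tr: "(\<Sum>r<R. X r r) = 1"
  shows "(\<Sum>r<R. \<Sum>r'<R. (cmod (X r r'))\<^sup>2)
    = (\<Sum>r<R. \<Sum>r'<R. (cmod (X r r' - (if r = r' then complex_of_real (1 / R) else 0)))\<^sup>2)
      + 1 / R"
proof -
  define \<Delta> where "\<Delta> r r' = X r r' - (if r = r' then complex_of_real (1 / R) else 0)" for r r'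
  have "(cmod (X r r'))\<^sup>2
      = (cmod (\<Delta> r r'))\<^sup>2 + (if r = r' then 2 * (1 / R) * Re (\<Delta> r r) + (1 / R)\<^sup>2 else 0)"
    for r r'
    using cmod_add_of_real_sq[of "\<Delta> r r" "1 / R"] by (auto simp: \<Delta>_def)
  then have "(\<Sum>r<R. \<Sum>r'<R. (cmod (X r r'))\<^sup>2)
      = (\<Sum>r<R. \<Sum>r'<R. (cmod (\<Delta> r r'))\<^sup>2) + (\<Sum>r<R. 2 * (1 / R) * Re (\<Delta> r r) + (1 / R)\<^sup>2)"
    by (simp add: sum.distrib)
  also have "(\<Sum>r<R. 2 * (1 / R) * Re (\<Delta> r r) + (1 / R)\<^sup>2)
      = 2 * (1 / R) * Re (\<Sum>r<R. \<Delta> r r) + R * (1 / R)\<^sup>2"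
    by (simp add: sum.distrib sum_distrib_left)
  also have "(\<Sum>r<R. \<Delta> r r) = 0"
    using tr R by (simp add: \<Delta>_def sum_subtractf)
  finally show ?thesis
    using R by (simp add: \<Delta>_def power2_eq_square)
qed

context qubit_partition
begin

text \<open>ETH is tested against the lift of the traceless part of the reduced state, normalised in
  Frobenius norm.\<close>

lemma traceless_reduced_le:
  fixes R :: nat and \<Delta> :: "nat \<Rightarrow> nat \<Rightarrow> complex"
  assumes dim: "dim_vec \<psi> = 2 ^ N" and norm: "cvnorm \<psi> = 1"
    and eth: "\<And>X. supported_on N (set xs) X \<Longrightarrow> opnorm_le1 X \<Longrightarrow>
      cmod (cinner \<psi> (X *\<^sub>v \<psi>) - mtrace X / 2 ^ N) \<le> \<epsilon>"
  defines "R \<equiv> 2 ^ length xs"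
  defines "\<Delta> \<equiv> \<lambda>r r'. reduced \<psi> $$ (r, r') - (if r = r' then complex_of_real (1 / R) else 0)"
  shows "(\<Sum>r<R. \<Sum>r'<R. (cmod (\<Delta> r r'))\<^sup>2) \<le> \<epsilon>\<^sup>2"
proof -
  define F where "F = (\<Sum>r<R. \<Sum>r'<R. (cmod (\<Delta> r r'))\<^sup>2)"
  have "(\<Sum>r<R. reduced \<psi> $$ (r, r)) = mtrace (reduced \<psi>)"
    by (simp add: mtrace_def reduced_def R_def)
  also have "\<dots> = 1"
    using norm dim by (simp add: mtrace_reduced cvnorm_def)
  finally have trace_\<Delta>: "(\<Sum>r<R. \<Delta> r r) = 0"
    by (simp add: \<Delta>_def R_def sum_subtractf)
  have herm: "reduced \<psi> $$ (r', r) = cnj (\<Delta> r r') + (if r = r' then complex_of_real (1 / R) else 0)"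
    if "r < R" "r' < R" for r r'
    using that by (simp add: \<Delta>_def reduced_def R_def mult.commute)
  show ?thesis
  proof (cases "F = 0")
    case False
    then have F: "F > 0"
      unfolding F_def by (simp add: order_less_le sum_nonneg)
    define D where "D r r' = \<Delta> r r' / sqrt F" for r r'
    have "(\<Sum>r<R. \<Sum>r'<R. (cmod (D r r'))\<^sup>2) = F / F"
      using F by (simp add: D_def F_def norm_divide power_divide flip: sum_divide_distrib)
    then have "opnorm_le1 (lift D)"
      using F by (intro opnorm_le1_lift) (simp add: R_def)
    then have "cmod (cinner \<psi> (lift D *\<^sub>v \<psi>) - mtrace (lift D) / 2 ^ N) \<le> \<epsilon>"
      by (intro eth supported_on_lift)
    moreover have "mtrace (lift D) = 0"
      using trace_\<Delta> by (simp add: mtrace_lift D_def R_def flip: sum_divide_distrib)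
    moreover have "cinner \<psi> (lift D *\<^sub>v \<psi>)
        = (\<Sum>r<R. \<Sum>r'<R. D r r' * cnj (\<Delta> r r') + (if r = r' then D r r / R else 0))"
      unfolding cinner_lift[OF dim] R_def[symmetric]
      by (intro sum.cong refl) (auto simp: herm distrib_left)
    moreover have "complex_of_real F = (\<Sum>r<R. \<Sum>r'<R. \<Delta> r r' * cnj (\<Delta> r r'))"
      unfolding F_def of_real_sum complex_norm_square ..
    then have "(\<Sum>r<R. \<Sum>r'<R. D r r' * cnj (\<Delta> r r') + (if r = r' then D r r / R else 0))
        = F / sqrt F + (\<Sum>r<R. \<Delta> r r) / (sqrt F * R)"
      by (simp add: D_def sum.distrib flip: sum_divide_distrib)
    moreover have "F / sqrt F = sqrt F"
      using F by (simp add: real_div_sqrt)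
    ultimately have "sqrt F \<le> \<epsilon>"
      using trace_\<Delta> by simp
    then show ?thesis
      using F unfolding F_def[symmetric]
      by (metis real_sqrt_ge_zero real_sqrt_pow2_iff order_less_imp_le power_mono)
  qed (simp add: F_def)
qed

lemma purity_reduced_le:
  assumes "dim_vec \<psi> = 2 ^ N" and "cvnorm \<psi> = 1"
    and "\<And>X. supported_on N (set xs) X \<Longrightarrow> opnorm_le1 X \<Longrightarrow>
      cmod (cinner \<psi> (X *\<^sub>v \<psi>) - mtrace X / 2 ^ N) \<le> \<epsilon>"
  shows "purity (reduced \<psi>) \<le> 1 / 2 ^ length xs + \<epsilon>\<^sup>2"
proof -
  have "(\<Sum>r<2 ^ length xs. reduced \<psi> $$ (r, r)) = 1"
    using assms(1,2) mtrace_reduced[of \<psi>] by (simp add: mtrace_def reduced_def cvnorm_def)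
  then show ?thesis
    using sum_cmod_sq_eq_traceless_part[of "2 ^ length xs" "\<lambda>r r'. reduced \<psi> $$ (r, r')"]
      traceless_reduced_le[OF assms]
    by (simp add: purity_def reduced_def)
qed

end

lemma purity_pos:
  assumes "M \<in> carrier_mat d d" and "mtrace M = 1"
  shows "purity M > 0"
proof -
  obtain r where r: "r < d" "M $$ (r, r) \<noteq> 0"
    using assms by (metis (no_types, lifting) carrier_matD(1) lessThan_iff mtrace_def
        sum.neutral zero_neq_one)
  have "0 < (cmod (M $$ (r, r)))\<^sup>2"
    using r by simp
  also have "\<dots> \<le> (\<Sum>r'<d. (cmod (M $$ (r, r')))\<^sup>2)"
    using r by (intro member_le_sum) auto
  also have "\<dots> \<le> (\<Sum>r<d. \<Sum>r'<d. (cmod (M $$ (r, r')))\<^sup>2)"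
    using r by (intro member_le_sum[of r]) (auto intro: sum_nonneg)
  also have "\<dots> = purity M"
    using assms(1) by (simp add: purity_def)
  finally show ?thesis .
qed

locale qubit_cut =
  fixes N :: nat and A :: "nat set"
  assumes subset: "A \<subseteq> {..<N}"

sublocale qubit_cut \<subseteq> qubit_partition "sorted_list_of_set A" "sorted_list_of_set ({0..<N} - A)" N
  using subset finite_subset[OF subset] by unfold_locales auto

context qubit_cut
begin

lemma reduced_dm_eq_reduced: "reduced_dm N A \<psi> = reduced \<psi>"
  by (simp add: reduced_dm_def reduced_def join_def Let_def)

lemma mtrace_reduced_dm:
  assumes "dim_vec \<psi> = 2 ^ N" and "cvnorm \<psi> = 1"
  shows "mtrace (reduced_dm N A \<psi>) = 1"
  using assms by (simp add: reduced_dm_eq_reduced mtrace_reduced cvnorm_def)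

lemma ent_entropy_ge_neg_ln_purity:
  assumes "dim_vec \<psi> = 2 ^ N" and "cvnorm \<psi> = 1"
  shows "ent_entropy N A \<psi> \<ge> - ln (purity (reduced_dm N A \<psi>))"
  unfolding ent_entropy_def reduced_dm_eq_reduced
  by (rule vn_entropy_ge_neg_ln_purity[where M = "\<lambda>r s. \<psi> $ join r s"])
    (use mtrace_reduced_dm[OF assms] in \<open>simp_all add: reduced_dm_eq_reduced reduced_def\<close>)

lemma purity_reduced_dm_pos:
  assumes "dim_vec \<psi> = 2 ^ N" and "cvnorm \<psi> = 1"
  shows "purity (reduced_dm N A \<psi>) > 0"
  using mtrace_reduced_dm[OF assms]
  by (intro purity_pos[where d = "2 ^ card A"]) (simp_all add: reduced_dm_eq_reduced reduced_def)

lemma purity_reduced_dm_le: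
  assumes "dim_vec \<psi> = 2 ^ N" and "cvnorm \<psi> = 1"
    and "\<And>X. supported_on N A X \<Longrightarrow> opnorm_le1 X \<Longrightarrow>
      cmod (cinner \<psi> (X *\<^sub>v \<psi>) - mtrace X / 2 ^ N) \<le> \<epsilon>"
  shows "purity (reduced_dm N A \<psi>) \<le> 1 / 2 ^ card A + \<epsilon>\<^sup>2"
  using purity_reduced_le[OF assms(1,2)] assms(3) finite_subset[OF subset]
  by (simp add: reduced_dm_eq_reduced)

end

section \<open>Purity of a superposition with orthogonal labels\<close>

lemma sum_cmod_sq_scatter:
  fixes z :: "'a \<Rightarrow> complex" and a :: "'a \<Rightarrow> nat"
  assumes fin: "finite T" and inj: "inj_on a T" and range: "a ` T \<subseteq> {..<N}"
  shows "(\<Sum>r<N. (cmod (\<Sum>t\<in>T. if r = a t then z t else 0))\<^sup>2) = (\<Sum>t\<in>T. (cmod (z t))\<^sup>2)"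
proof -
  define F where "F r = (cmod (\<Sum>t\<in>T. if r = a t then z t else 0))\<^sup>2" for r
  have "(\<Sum>r<N. F r) = (\<Sum>r\<in>a ` T. F r)"
    using range by (intro sum.mono_neutral_right) (auto simp: F_def intro!: sum.neutral)
  also have "\<dots> = (\<Sum>t\<in>T. F (a t))"
    using inj by (rule sum.reindex[unfolded comp_def])
  also have "\<dots> = (\<Sum>t\<in>T. (cmod (z t))\<^sup>2)"
  proof (rule sum.cong[OF refl])
    fix t
    assume "t \<in> T"
    then have "(\<Sum>t'\<in>T. if a t = a t' then z t' else 0) = (\<Sum>t'\<in>T. if t = t' then z t' else 0)"
      using inj by (intro sum.cong refl) (auto simp: inj_on_def)
    then show "F (a t) = (cmod (z t))\<^sup>2"
      using fin \<open>t \<in> T\<close> by (simp add: F_def)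
  qed
  finally show ?thesis
    unfolding F_def .
qed

lemma sum_cmod_sq_gram_swap:
  fixes f g :: "nat \<Rightarrow> nat \<Rightarrow> complex"
  shows "complex_of_real (\<Sum>r<R. \<Sum>r'<R. (cmod (\<Sum>s<S. f r s * cnj (g r' s)))\<^sup>2)
    = (\<Sum>s<S. \<Sum>s'<S. (\<Sum>r<R. f r s * cnj (f r s')) * cnj (\<Sum>r'<R. g r' s * cnj (g r' s')))"
proof -
  have "complex_of_real (\<Sum>r<R. \<Sum>r'<R. (cmod (\<Sum>s<S. f r s * cnj (g r' s)))\<^sup>2)
      = (\<Sum>r<R. \<Sum>r'<R. \<Sum>s<S. \<Sum>s'<S. f r s * cnj (f r s') * (cnj (g r' s) * g r' s'))"
    unfolding of_real_sum complex_norm_square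
    by (simp add: cnj_sum sum_product mult_ac)
  also have "\<dots> = (\<Sum>s<S. \<Sum>s'<S. \<Sum>r<R. \<Sum>r'<R. f r s * cnj (f r s') * (cnj (g r' s) * g r' s'))"
    by (simp only: sum.swap[of _ "{..<R}" "{..<S}"])
  also have "\<dots> = (\<Sum>s<S. \<Sum>s'<S. (\<Sum>r<R. f r s * cnj (f r s')) * cnj (\<Sum>r'<R. g r' s * cnj (g r' s')))"
    by (simp add: cnj_sum sum_product mult_ac)
  finally show ?thesis .
qed

text \<open>In matrix terms: \<open>\<parallel>F G\<^sup>*\<parallel>\<^sup>2 = \<langle>F\<^sup>* F, G\<^sup>* G\<rangle> \<le> \<parallel>F F\<^sup>*\<parallel> \<parallel>G G\<^sup>*\<parallel>\<close> for Frobenius norms.\<close>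

lemma sum_cmod_sq_cross_le:
  fixes f g :: "nat \<Rightarrow> nat \<Rightarrow> complex"
  assumes Pf: "(\<Sum>r<R. \<Sum>r'<R. (cmod (\<Sum>s<S. f r s * cnj (f r' s)))\<^sup>2) \<le> P"
    and Pg: "(\<Sum>r<R. \<Sum>r'<R. (cmod (\<Sum>s<S. g r s * cnj (g r' s)))\<^sup>2) \<le> P"
  shows "(\<Sum>r<R. \<Sum>r'<R. (cmod (\<Sum>s<S. f r s * cnj (g r' s)))\<^sup>2) \<le> P"
proof -
  define Zf where "Zf p = (\<Sum>r<R. f r (fst p) * cnj (f r (snd p)))" for p
  define Zg where "Zg p = (\<Sum>r<R. g r (fst p) * cnj (g r (snd p)))" for p
  have norm_sq: "(\<Sum>r<R. \<Sum>r'<R. (cmod (\<Sum>s<S. h r s * cnj (h r' s)))\<^sup>2)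
      = (\<Sum>p\<in>{..<S} \<times> {..<S}. (cmod (\<Sum>r<R. h r (fst p) * cnj (h r (snd p))))\<^sup>2)" for h
  proof -
    have "complex_of_real (\<Sum>r<R. \<Sum>r'<R. (cmod (\<Sum>s<S. h r s * cnj (h r' s)))\<^sup>2)
        = (\<Sum>s<S. \<Sum>s'<S. (\<Sum>r<R. h r s * cnj (h r s')) * cnj (\<Sum>r'<R. h r' s * cnj (h r' s')))"
      by (rule sum_cmod_sq_gram_swap)
    also have "\<dots> = complex_of_real (\<Sum>p\<in>{..<S} \<times> {..<S}. (cmod (\<Sum>r<R. h r (fst p) * cnj (h r (snd p))))\<^sup>2)"
      unfolding of_real_sum complex_norm_square by (simp only: sum.cartesian_product split_def)
    finally have "complex_of_real (\<Sum>r<R. \<Sum>r'<R. (cmod (\<Sum>s<S. h r s * cnj (h r' s)))\<^sup>2)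
        = complex_of_real (\<Sum>p\<in>{..<S} \<times> {..<S}. (cmod (\<Sum>r<R. h r (fst p) * cnj (h r (snd p))))\<^sup>2)" .
    then show ?thesis
      by (rule of_real_eq_iff[THEN iffD1])
  qed
  have "0 \<le> (\<Sum>r<R. \<Sum>r'<R. (cmod (\<Sum>s<S. f r s * cnj (f r' s)))\<^sup>2)"
    by (intro sum_nonneg) auto
  with Pf have P: "P \<ge> 0"
    by linarith
  have "complex_of_real (\<Sum>r<R. \<Sum>r'<R. (cmod (\<Sum>s<S. f r s * cnj (g r' s)))\<^sup>2)
      = (\<Sum>p\<in>{..<S} \<times> {..<S}. Zf p * cnj (Zg p))"
    unfolding sum_cmod_sq_gram_swap Zf_def Zg_def by (simp only: sum.cartesian_product split_def)
  then have "(\<Sum>r<R. \<Sum>r'<R. (cmod (\<Sum>s<S. f r s * cnj (g r' s)))\<^sup>2)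
      = cmod (\<Sum>p\<in>{..<S} \<times> {..<S}. Zf p * cnj (Zg p))"
    by (metis (no_types, lifting) abs_of_nonneg norm_of_real sum_nonneg zero_le_power2)
  also have "\<dots> \<le> sqrt ((\<Sum>p\<in>{..<S} \<times> {..<S}. (cmod (Zf p))\<^sup>2) * (\<Sum>p\<in>{..<S} \<times> {..<S}. (cmod (Zg p))\<^sup>2))"
    using cmod_sum_mult_sq_le[of Zf "\<lambda>p. cnj (Zg p)"] by (simp add: real_le_rsqrt)
  also have "\<dots> \<le> sqrt (P * P)"
    using Pf Pg P unfolding norm_sq Zf_def Zg_def
    by (intro real_sqrt_le_mono mult_mono) (auto intro: sum_nonneg)
  also have "\<dots> = P"
    using P by simp
  finally show ?thesis .
qed

text \<open>A superposition \<open>\<Sum>\<^sub>t c\<^sub>t \<phi>\<^sub>t \<otimes> |a\<^sub>t\<rangle> \<otimes> |b\<^sub>t\<rangle>\<close> of bipartite states \<open>\<phi>\<^sub>t\<close> with labels \<open>a\<^sub>t\<close> inside and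
  \<open>b\<^sub>t\<close> outside the cut, where only \<open>a\<^sub>t\<close> is nonzero for \<open>t \<in> J\<close> and only \<open>b\<^sub>t\<close> otherwise.
  Tracing out the outside turns the branches \<open>t \<notin> J\<close> into an incoherent mixture, while the
  branches \<open>t \<in> J\<close> stay coherent.\<close>

locale clock_superposition =
  fixes n :: nat and J :: "nat set" and a b :: "nat \<Rightarrow> nat" and L M :: nat
    and c :: "nat \<Rightarrow> complex" and \<phi> :: "nat \<Rightarrow> nat \<Rightarrow> nat \<Rightarrow> complex" and R S :: nat and P :: real
  assumes J_subset: "J \<subseteq> {..<n}"
    and a_less: "t < n \<Longrightarrow> a t < L" and b_less: "t < n \<Longrightarrow> b t < M"
    and labels_in: "t \<in> J \<Longrightarrow> a t \<noteq> 0 \<and> b t = 0"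
    and labels_out: "t < n \<Longrightarrow> t \<notin> J \<Longrightarrow> a t = 0 \<and> b t \<noteq> 0"
    and inj_a: "inj_on a J" and inj_b: "inj_on b ({..<n} - J)"
    and c_sq: "t < n \<Longrightarrow> (cmod (c t))\<^sup>2 = 1 / n"
    and purity_\<phi>: "t < n \<Longrightarrow> (\<Sum>r<R. \<Sum>r'<R. (cmod (\<Sum>s<S. \<phi> t r s * cnj (\<phi> t r' s)))\<^sup>2) \<le> P"
begin

definition K :: "nat set" where
  "K = {..<n} - J"

definition \<Psi> :: "nat \<Rightarrow> nat \<Rightarrow> nat \<Rightarrow> nat \<Rightarrow> complex" where
  "\<Psi> r1 r2 s1 s2 = (\<Sum>t<n. if r2 = a t \<and> s2 = b t then c t * \<phi> t r1 s1 else 0)"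

definition \<rho> :: "nat \<Rightarrow> nat \<Rightarrow> nat \<Rightarrow> nat \<Rightarrow> complex" where
  "\<rho> r1 r2 r1' r2' = (\<Sum>s2<M. \<Sum>s1<S. \<Psi> r1 r2 s1 s2 * cnj (\<Psi> r1' r2' s1 s2))"

definition Y :: "nat \<Rightarrow> nat \<Rightarrow> nat \<Rightarrow> nat \<Rightarrow> complex" where
  "Y t t' r r' = (\<Sum>s<S. \<phi> t r s * cnj (\<phi> t' r' s))"

definition \<rho>_out :: "nat \<Rightarrow> nat \<Rightarrow> nat \<Rightarrow> nat \<Rightarrow> complex" where
  "\<rho>_out r1 r2 r1' r2' = (if r2 = 0 \<and> r2' = 0 then \<Sum>t\<in>K. c t * cnj (c t) * Y t t r1 r1' else 0)"

definition \<rho>_in :: "nat \<Rightarrow> nat \<Rightarrow> nat \<Rightarrow> nat \<Rightarrow> complex" where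
  "\<rho>_in r1 r2 r1' r2' =
     (\<Sum>t\<in>J. \<Sum>t'\<in>J. if r2 = a t \<and> r2' = a t' then c t * cnj (c t') * Y t t' r1 r1' else 0)"

lemma finite_J: "finite J" and finite_K: "finite K"
  using finite_subset[OF J_subset] by (auto simp: K_def)

lemma K_subset: "K \<subseteq> {..<n}"
  by (auto simp: K_def)

lemma card_K: "card K = n - card J"
  using J_subset by (simp add: K_def card_Diff_subset finite_J)

lemma \<rho>_eq:
  "\<rho> r1 r2 r1' r2' = (\<Sum>t<n. \<Sum>t'<n.
     if r2 = a t \<and> r2' = a t' \<and> b t = b t' then c t * cnj (c t') * Y t t' r1 r1' else 0)"
proof -
  define G where "G t t' s1 s2 = (if r2 = a t \<and> s2 = b t \<and> r2' = a t' \<and> s2 = b t'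
      then c t * cnj (c t') * (\<phi> t r1 s1 * cnj (\<phi> t' r1' s1)) else 0)" for t t' s1 s2
  have "\<rho> r1 r2 r1' r2' = (\<Sum>s2<M. \<Sum>s1<S. \<Sum>t<n. \<Sum>t'<n. G t t' s1 s2)"
    unfolding \<rho>_def \<Psi>_def cnj_sum sum_product G_def by (intro sum.cong refl) auto
  also have "\<dots> = (\<Sum>t<n. \<Sum>t'<n. \<Sum>s2<M. \<Sum>s1<S. G t t' s1 s2)"
    by (simp only: sum.swap[of _ "{..<S}" "{..<n}"] sum.swap[of _ "{..<M}" "{..<n}"])
  also have "\<dots> = (\<Sum>t<n. \<Sum>t'<n.
      if r2 = a t \<and> r2' = a t' \<and> b t = b t' then c t * cnj (c t') * Y t t' r1 r1' else 0)"
  proof (intro sum.cong refl)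
    fix t t'
    assume t: "t \<in> {..<n}"
    show "(\<Sum>s2<M. \<Sum>s1<S. G t t' s1 s2) = (if r2 = a t \<and> r2' = a t' \<and> b t = b t'
        then c t * cnj (c t') * Y t t' r1 r1' else 0)"
    proof (cases "r2 = a t \<and> r2' = a t' \<and> b t = b t'")
      case True
      then have "(\<Sum>s2<M. \<Sum>s1<S. G t t' s1 s2) = (\<Sum>s2<M. if s2 = b t
          then \<Sum>s1<S. c t * cnj (c t') * (\<phi> t r1 s1 * cnj (\<phi> t' r1' s1)) else 0)"
        by (intro sum.cong refl) (auto simp: G_def)
      moreover have "b t < M"
        using b_less t by simp
      ultimately show ?thesis
        using True by (simp add: Y_def sum_distrib_left)
    qed (auto simp: G_def intro!: sum.neutral)
  qed
  finally show ?thesis .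
qed

lemma \<rho>_split: "\<rho> r1 r2 r1' r2' = \<rho>_out r1 r2 r1' r2' + \<rho>_in r1 r2 r1' r2'"
proof -
  define H where "H t t' = (if r2 = a t \<and> r2' = a t' \<and> b t = b t'
      then c t * cnj (c t') * Y t t' r1 r1' else 0)" for t t'
  have split: "(\<Sum>t<n. f t) = (\<Sum>t\<in>J. f t) + (\<Sum>t\<in>K. f t)" for f :: "nat \<Rightarrow> complex"
    using J_subset finite_J finite_K
    by (simp add: K_def sum.subset_diff[of J "{..<n}"])
  have mixed: "H t t' = 0" if "t \<in> J \<and> t' \<in> K \<or> t \<in> K \<and> t' \<in> J" for t t'
    using that labels_in[of t] labels_in[of t'] labels_out[of t] labels_out[of t']
    by (auto simp: H_def K_def)
  have "(\<Sum>t\<in>J. \<Sum>t'\<in>J. H t t') = \<rho>_in r1 r2 r1' r2'"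
    using labels_in by (simp add: \<rho>_in_def H_def)
  moreover have "(\<Sum>t'\<in>K. H t t') = (if r2 = 0 \<and> r2' = 0 then c t * cnj (c t) * Y t t r1 r1' else 0)"
    if t: "t \<in> K" for t
  proof -
    have "(\<Sum>t'\<in>K - {t}. H t t') = 0"
      using t inj_b by (intro sum.neutral) (auto simp: H_def K_def inj_on_def)
    then have "(\<Sum>t'\<in>K. H t t') = H t t"
      using sum.remove[OF finite_K t, of "H t"] by simp
    then show ?thesis
      using t labels_out by (simp add: H_def K_def)
  qed
  then have "(\<Sum>t\<in>K. \<Sum>t'\<in>K. H t t') = \<rho>_out r1 r2 r1' r2'"
    by (simp add: \<rho>_out_def)
  ultimately show ?thesis
    unfolding \<rho>_eq H_def[symmetric] split by (simp add: mixed)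
qed

lemma cmod_sq_\<rho>:
  "(cmod (\<rho> r1 r2 r1' r2'))\<^sup>2 = (cmod (\<rho>_out r1 r2 r1' r2'))\<^sup>2 + (cmod (\<rho>_in r1 r2 r1' r2'))\<^sup>2"
proof (cases "r2 = 0")
  case True
  then have "r2 \<noteq> a t" if "t \<in> J" for t
    using labels_in[OF that] by simp
  then have "\<rho>_in r1 r2 r1' r2' = 0"
    by (auto simp: \<rho>_in_def intro!: sum.neutral)
  then show ?thesis
    by (simp add: \<rho>_split)
qed (simp add: \<rho>_split \<rho>_out_def)

lemma sum_cmod_sq_Y_le: "t < n \<Longrightarrow> t' < n \<Longrightarrow> (\<Sum>r<R. \<Sum>r'<R. (cmod (Y t t' r r'))\<^sup>2) \<le> P"
  unfolding Y_def by (rule sum_cmod_sq_cross_le) (use purity_\<phi> in auto)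

lemma cmod_sq_coeff_mult:
  assumes "t < n" "t' < n"
  shows "(cmod (c t * cnj (c t') * z))\<^sup>2 = (cmod z)\<^sup>2 / n\<^sup>2"
proof -
  have "(cmod (c t * cnj (c t') * z))\<^sup>2 = (cmod (c t))\<^sup>2 * (cmod (c t'))\<^sup>2 * (cmod z)\<^sup>2"
    by (simp add: norm_mult power_mult_distrib)
  also have "\<dots> = 1 / n * (1 / n) * (cmod z)\<^sup>2"
    unfolding c_sq[OF assms(1)] c_sq[OF assms(2)] ..
  finally show ?thesis
    by (simp add: power2_eq_square)
qed

lemma purity_\<rho>_out:
  "(\<Sum>r1<R. \<Sum>r1'<R. \<Sum>r2<L. \<Sum>r2'<L. (cmod (\<rho>_out r1 r2 r1' r2'))\<^sup>2) \<le> (card K)\<^sup>2 / n\<^sup>2 * P"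
proof -
  define X where "X r1 r1' = (\<Sum>t\<in>K. c t * cnj (c t) * Y t t r1 r1')" for r1 r1'
  have "(\<Sum>r2<L. \<Sum>r2'<L. (cmod (\<rho>_out r1 r2 r1' r2'))\<^sup>2) \<le> (cmod (X r1 r1'))\<^sup>2" for r1 r1'
  proof -
    have sq: "(cmod (\<rho>_out r1 r2 r1' r2'))\<^sup>2 = (if r2 = 0 \<and> r2' = 0 then (cmod (X r1 r1'))\<^sup>2 else 0)"
      for r2 r2'
      by (simp add: \<rho>_out_def X_def)
    have "(\<Sum>r2<L. \<Sum>r2'<L. (cmod (\<rho>_out r1 r2 r1' r2'))\<^sup>2)
        = (\<Sum>r2<L. if r2 = 0 then \<Sum>r2'<L. if r2' = 0 then (cmod (X r1 r1'))\<^sup>2 else 0 else 0)"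
    proof (intro sum.cong refl)
      fix r2 :: nat
      show "(\<Sum>r2'<L. (cmod (\<rho>_out r1 r2 r1' r2'))\<^sup>2)
          = (if r2 = 0 then \<Sum>r2'<L. if r2' = 0 then (cmod (X r1 r1'))\<^sup>2 else 0 else 0)"
        using sq by (cases "r2 = 0") simp_all
    qed
    then show ?thesis
      by simp
  qed
  then have "(\<Sum>r1<R. \<Sum>r1'<R. \<Sum>r2<L. \<Sum>r2'<L. (cmod (\<rho>_out r1 r2 r1' r2'))\<^sup>2)
      \<le> (\<Sum>r1<R. \<Sum>r1'<R. (cmod (X r1 r1'))\<^sup>2)"
    by (intro sum_mono)
  also have "\<dots> \<le> (\<Sum>r1<R. \<Sum>r1'<R. card K * (\<Sum>t\<in>K. (cmod (Y t t r1 r1'))\<^sup>2 / n\<^sup>2))"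
  proof (intro sum_mono)
    fix r1 r1'
    have "(cmod (X r1 r1'))\<^sup>2 \<le> card K * (\<Sum>t\<in>K. (cmod (c t * cnj (c t) * Y t t r1 r1'))\<^sup>2)"
      using cmod_sum_mult_sq_le[of "\<lambda>_. 1" "\<lambda>t. c t * cnj (c t) * Y t t r1 r1'" K]
      by (simp add: X_def)
    also have "\<dots> = card K * (\<Sum>t\<in>K. (cmod (Y t t r1 r1'))\<^sup>2 / n\<^sup>2)"
      using K_subset by (simp add: cmod_sq_coeff_mult subset_iff)
    finally show "(cmod (X r1 r1'))\<^sup>2 \<le> card K * (\<Sum>t\<in>K. (cmod (Y t t r1 r1'))\<^sup>2 / n\<^sup>2)" .
  qed
  also have "\<dots> = card K / n\<^sup>2 * (\<Sum>t\<in>K. \<Sum>r1<R. \<Sum>r1'<R. (cmod (Y t t r1 r1'))\<^sup>2)"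
    by (simp add: sum_distrib_left sum_divide_distrib sum.swap[of _ "{..<R}" K])
  also have "\<dots> \<le> card K / n\<^sup>2 * (\<Sum>t\<in>K. P)"
    using K_subset by (intro mult_left_mono sum_mono sum_cmod_sq_Y_le) auto
  finally show ?thesis
    by (simp add: power2_eq_square)
qed

lemma purity_\<rho>_in:
  "(\<Sum>r1<R. \<Sum>r1'<R. \<Sum>r2<L. \<Sum>r2'<L. (cmod (\<rho>_in r1 r2 r1' r2'))\<^sup>2) \<le> (card J)\<^sup>2 / n\<^sup>2 * P"
proof -
  have a_range: "a ` J \<subseteq> {..<L}"
    using J_subset a_less by auto
  define z where "z r1 r1' t t' = c t * cnj (c t') * Y t t' r1 r1'" for r1 r1' t t'
  have inner: "(\<Sum>r2<L. \<Sum>r2'<L. (cmod (\<rho>_in r1 r2 r1' r2'))\<^sup>2)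
      = (\<Sum>t\<in>J. \<Sum>t'\<in>J. (cmod (z r1 r1' t t'))\<^sup>2)" for r1 r1'
  proof -
    define W where "W r2' t = (\<Sum>t'\<in>J. if r2' = a t' then z r1 r1' t t' else 0)" for r2' t
    have "\<rho>_in r1 r2 r1' r2' = (\<Sum>t\<in>J. if r2 = a t then W r2' t else 0)" for r2 r2'
      unfolding \<rho>_in_def W_def z_def by (intro sum.cong refl) auto
    then have "(\<Sum>r2<L. \<Sum>r2'<L. (cmod (\<rho>_in r1 r2 r1' r2'))\<^sup>2)
        = (\<Sum>r2'<L. \<Sum>t\<in>J. (cmod (W r2' t))\<^sup>2)"
      using finite_J inj_a a_range by (subst sum.swap) (simp add: sum_cmod_sq_scatter)
    also have "\<dots> = (\<Sum>t\<in>J. \<Sum>t'\<in>J. (cmod (z r1 r1' t t'))\<^sup>2)"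
      using finite_J inj_a a_range by (subst sum.swap) (simp add: W_def sum_cmod_sq_scatter)
    finally show ?thesis .
  qed
  have "(\<Sum>r1<R. \<Sum>r1'<R. \<Sum>r2<L. \<Sum>r2'<L. (cmod (\<rho>_in r1 r2 r1' r2'))\<^sup>2)
      = (\<Sum>t\<in>J. \<Sum>t'\<in>J. (\<Sum>r1<R. \<Sum>r1'<R. (cmod (Y t t' r1 r1'))\<^sup>2) / n\<^sup>2)"
    using J_subset
    by (simp add: inner z_def cmod_sq_coeff_mult subset_iff sum_divide_distrib
        sum.swap[of _ "{..<R}" J])
  also have "\<dots> \<le> (\<Sum>t\<in>J. \<Sum>t'\<in>J. P / n\<^sup>2)"
    using J_subset by (intro sum_mono divide_right_mono sum_cmod_sq_Y_le) auto
  finally show ?thesis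
    by (simp add: power2_eq_square)
qed

lemma purity_\<rho>:
  "(\<Sum>r1<R. \<Sum>r1'<R. \<Sum>r2<L. \<Sum>r2'<L. (cmod (\<rho> r1 r2 r1' r2'))\<^sup>2)
    \<le> ((real (n - card J))\<^sup>2 + (real (card J))\<^sup>2) / (real n)\<^sup>2 * P"
  using add_mono[OF purity_\<rho>_out purity_\<rho>_in]
  by (simp add: cmod_sq_\<rho> sum.distrib card_K add_divide_distrib distrib_right)

end

section \<open>Clock states\<close>

lemma sum_lessThan_add: "(\<Sum>k<a + b. f k) = (\<Sum>k<a. f k) + (\<Sum>k<b. f (a + k))"
  for a b :: nat
  by (induction b) (simp_all add: add.assoc)

lemma sum_lessThan_mult: "(\<Sum>i<a * b. g i) = (\<Sum>q<b. \<Sum>r<a. g (r + a * q))"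
  for a b :: nat
proof (induction b)
  case (Suc b)
  have "(\<Sum>i<a * Suc b. g i) = (\<Sum>i<a * b + a. g i)"
    by (simp add: add.commute)
  also have "\<dots> = (\<Sum>i<a * b. g i) + (\<Sum>r<a. g (a * b + r))"
    by (rule sum_lessThan_add)
  finally show ?case
    using Suc by (simp add: add.commute)
qed simp

lemma embed_bits_append_shift:
  "embed_bits (xs @ map ((+) n) ys) r
    = embed_bits xs (r mod 2 ^ length xs) + 2 ^ n * embed_bits ys (r div 2 ^ length xs)"
proof -
  have "embed_bits (xs @ map ((+) n) ys) r
      = (\<Sum>k<length xs. if bit r k then 2 ^ ((xs @ map ((+) n) ys) ! k) else 0)
        + (\<Sum>k<length ys. if bit r (length xs + k) then 2 ^ ((xs @ map ((+) n) ys) ! (length xs + k)) else 0)"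
    unfolding embed_bits_def by (simp add: sum_lessThan_add)
  also have "(\<Sum>k<length xs. if bit r k then 2 ^ ((xs @ map ((+) n) ys) ! k) else 0)
      = embed_bits xs (r mod 2 ^ length xs)"
    unfolding embed_bits_def
    by (intro sum.cong refl) (simp add: nth_append bit_take_bit_iff flip: take_bit_eq_mod)
  also have "(\<Sum>k<length ys. if bit r (length xs + k) then 2 ^ ((xs @ map ((+) n) ys) ! (length xs + k)) else 0)
      = 2 ^ n * embed_bits ys (r div 2 ^ length xs)"
    unfolding embed_bits_def sum_distrib_left
    by (intro sum.cong refl) (simp add: nth_append bit_drop_bit_eq power_add flip: drop_bit_eq_div)
  finally show ?thesis .
qed

lemma sorted_list_of_set_union_shift:
  fixes X Y :: "nat set"
  assumes "finite X" "finite Y" "X \<subseteq> {..<n}"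
  shows "sorted_list_of_set (X \<union> (\<lambda>y. n + y) ` Y)
    = sorted_list_of_set X @ map ((+) n) (sorted_list_of_set Y)"
proof -
  let ?l = "sorted_list_of_set X @ map ((+) n) (sorted_list_of_set Y)"
  have sorted: "sorted_wrt (<) ?l"
    unfolding sorted_wrt_append using assms
    by (auto simp: sorted_wrt_map strict_sorted_list_of_set subset_eq)
  have set: "set ?l = X \<union> (\<lambda>y. n + y) ` Y"
    using assms by auto
  have "length ?l = card (X \<union> (\<lambda>y. n + y) ` Y)"
    using distinct_card[of ?l] sorted set by (simp add: strict_sorted_iff)
  then show ?thesis
    using sorted_list_of_set_unique[of "X \<union> (\<lambda>y. n + y) ` Y" ?l] sorted set assms by auto
qed

definition clock_state :: "nat \<Rightarrow> (nat \<Rightarrow> complex) \<Rightarrow> (nat \<Rightarrow> complex vec) \<Rightarrow> complex vec" where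
  "clock_state n c \<psi> = vec (2 ^ (2 * n)) (\<lambda>i.
     \<Sum>t<n. if i div 2 ^ n = 2 ^ t then c t * \<psi> t $ (i mod 2 ^ n) else 0)"

lemma Psi_state_eq_clock_state:
  "Psi_state n u v k ph = clock_state n
     (\<lambda>t. cis ((k - ph / real n) * real t) / complex_of_real (sqrt (real n)))
     (\<lambda>t. Uprod (2 ^ n) u t *\<^sub>v v)"
  by (simp add: Psi_state_def clock_state_def)

lemma clock_state_index:
  assumes "lo < 2 ^ n" "hi < 2 ^ n"
  shows "clock_state n c \<psi> $ (lo + 2 ^ n * hi) = (\<Sum>t<n. if hi = 2 ^ t then c t * \<psi> t $ lo else 0)"
proof -
  have "lo + 2 ^ n * hi < 2 ^ n * Suc hi"
    using assms by simp
  also have "\<dots> \<le> 2 ^ n * 2 ^ n"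
    using assms by (intro mult_le_mono2) simp
  finally have less: "lo + 2 ^ n * hi < 2 ^ (2 * n)"
    by (simp add: mult_2 power_add)
  have lo: "(lo + 2 ^ n * hi) mod 2 ^ n = lo" and hi: "(lo + 2 ^ n * hi) div 2 ^ n = hi"
    using assms by simp_all
  show ?thesis
    unfolding clock_state_def index_vec[OF less] lo hi ..
qed

lemma cvnorm_clock_state:
  assumes n: "n > 0" and dim: "\<And>t. t < n \<Longrightarrow> dim_vec (\<psi> t) = 2 ^ n"
    and norm: "\<And>t. t < n \<Longrightarrow> cvnorm (\<psi> t) = 1" and c: "\<And>t. t < n \<Longrightarrow> (cmod (c t))\<^sup>2 = 1 / n"
  shows "cvnorm (clock_state n c \<psi>) = 1"
proof -
  have "(2::nat) ^ (2 * n) = 2 ^ n * 2 ^ n"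
    by (simp add: mult_2 power_add)
  then have "(\<Sum>i<2 ^ (2 * n). (cmod (clock_state n c \<psi> $ i))\<^sup>2)
      = (\<Sum>hi<2 ^ n. \<Sum>lo<2 ^ n. (cmod (clock_state n c \<psi> $ (lo + 2 ^ n * hi)))\<^sup>2)"
    by (simp only: sum_lessThan_mult)
  also have "\<dots> = (\<Sum>hi<2 ^ n. \<Sum>lo<2 ^ n. (cmod (\<Sum>t<n. if hi = (2::nat) ^ t then c t * \<psi> t $ lo else 0))\<^sup>2)"
    by (intro sum.cong refl) (simp add: clock_state_index)
  also have "\<dots> = (\<Sum>lo<2 ^ n. \<Sum>hi<2 ^ n. (cmod (\<Sum>t<n. if hi = (2::nat) ^ t then c t * \<psi> t $ lo else 0))\<^sup>2)"
    by (rule sum.swap)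
  also have "\<dots> = (\<Sum>lo<2 ^ n. \<Sum>t<n. (cmod (c t * \<psi> t $ lo))\<^sup>2)"
    by (intro sum.cong refl sum_cmod_sq_scatter) (auto simp: inj_on_def)
  also have "\<dots> = (\<Sum>t<n. 1 / real n * (\<Sum>lo<2 ^ n. (cmod (\<psi> t $ lo))\<^sup>2))"
    by (subst sum.swap) (simp add: norm_mult power_mult_distrib c sum_distrib_left)
  also have "\<dots> = 1"
    using n dim norm by (simp add: cvnorm_def)
  finally show ?thesis
    by (simp add: cvnorm_def clock_state_def)
qed

lemma diff_union_shift:
  fixes J :: "nat set"
  assumes "J \<subseteq> {..<n}"
  shows "{0..<2 * n} - (J \<union> (\<lambda>j. n + j) ` J) = ({0..<n} - J) \<union> (\<lambda>j. n + j) ` ({0..<n} - J)"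
proof
  show "{0..<2 * n} - (J \<union> (\<lambda>j. n + j) ` J) \<subseteq> ({0..<n} - J) \<union> (\<lambda>j. n + j) ` ({0..<n} - J)"
  proof
    fix x
    assume x: "x \<in> {0..<2 * n} - (J \<union> (\<lambda>j. n + j) ` J)"
    show "x \<in> ({0..<n} - J) \<union> (\<lambda>j. n + j) ` ({0..<n} - J)"
    proof (cases "x < n")
      case False
      have "x - n \<notin> J"
      proof
        assume "x - n \<in> J"
        then have "n + (x - n) \<in> (\<lambda>j. n + j) ` J"
          by blast
        with x False show False
          by simp
      qed
      then show ?thesis
        using x False by (intro UnI2 image_eqI[of x _ "x - n"]) auto
    qed (use x in auto)
  qed
qed (use assms in auto)

text \<open>Spin site \<open>j\<close> is qubit \<open>j\<close> and clock site \<open>t\<close> is qubit \<open>n + t\<close>; the cut keeps the spin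
  and clock sites in \<open>J\<close>.\<close>

locale clock_cut =
  fixes n :: nat and J :: "nat set"
  assumes J_subset: "J \<subseteq> {..<n}"
begin

sublocale spin: qubit_cut n J
  using J_subset by unfold_locales

sublocale full: qubit_cut "2 * n" "J \<union> (\<lambda>j. n + j) ` J"
  using J_subset by unfold_locales auto

abbreviation "inside \<equiv> sorted_list_of_set J"
abbreviation "outside \<equiv> sorted_list_of_set ({0..<n} - J)"

lemma finite_J: "finite J"
  using J_subset finite_subset by blast

lemma card_outside: "card ({0..<n} - J) = n - card J"
  using J_subset by (simp add: card_Diff_subset finite_J subset_iff)

lemma full_inside: "sorted_list_of_set (J \<union> (\<lambda>j. n + j) ` J) = inside @ map ((+) n) inside"
  using J_subset finite_J by (intro sorted_list_of_set_union_shift) auto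

lemma full_outside:
  "sorted_list_of_set ({0..<2 * n} - (J \<union> (\<lambda>j. n + j) ` J)) = outside @ map ((+) n) outside"
  unfolding diff_union_shift[OF J_subset] by (rule sorted_list_of_set_union_shift) auto

lemma card_full_inside: "card (J \<union> (\<lambda>j. n + j) ` J) = card J + card J"
  using arg_cong[OF full_inside, of length] by simp

lemma card_full_outside: "card ({0..<2 * n} - (J \<union> (\<lambda>j. n + j) ` J)) = (n - card J) + (n - card J)"
  using arg_cong[OF full_outside, of length] by (simp add: card_outside)

lemma full_join:
  "full.join r s = spin.join (r mod 2 ^ card J) (s mod 2 ^ (n - card J))
     + 2 ^ n * spin.join (r div 2 ^ card J) (s div 2 ^ (n - card J))"
  unfolding full.join_def spin.join_def
  unfolding full_inside full_outside embed_bits_append_shift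
  by (simp add: card_outside algebra_simps)

lemma clock_state_full_join:
  assumes "r1 < 2 ^ card J" "r2 < 2 ^ card J" "s1 < 2 ^ (n - card J)" "s2 < 2 ^ (n - card J)"
  shows "clock_state n c \<psi> $ full.join (r1 + 2 ^ card J * r2) (s1 + 2 ^ (n - card J) * s2)
    = (\<Sum>t<n. if r2 = extract_bits inside (2 ^ t) \<and> s2 = extract_bits outside (2 ^ t)
        then c t * \<psi> t $ spin.join r1 s1 else 0)"
proof -
  have "full.join (r1 + 2 ^ card J * r2) (s1 + 2 ^ (n - card J) * s2)
      = spin.join r1 s1 + 2 ^ n * spin.join r2 s2"
    using assms by (simp add: full_join)
  moreover have "spin.join r2 s2 = 2 ^ t \<longleftrightarrow>
      r2 = extract_bits inside (2 ^ t) \<and> s2 = extract_bits outside (2 ^ t)" if "t < n" for t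
    using assms that by (intro spin.join_eq_iff) (simp_all add: card_outside)
  ultimately show ?thesis
    by (simp add: clock_state_index spin.join_less)
qed

lemma clock_superposition_clock_state:
  assumes "\<And>t. t < n \<Longrightarrow> (cmod (c t))\<^sup>2 = 1 / n"
    and "\<And>t. t < n \<Longrightarrow> purity (reduced_dm n J (\<psi> t)) \<le> P"
  shows "clock_superposition n J (\<lambda>t. extract_bits inside (2 ^ t)) (\<lambda>t. extract_bits outside (2 ^ t))
    (2 ^ card J) (2 ^ (n - card J)) c (\<lambda>t r s. \<psi> t $ spin.join r s) (2 ^ card J) (2 ^ (n - card J)) P"
proof
  show "extract_bits inside (2 ^ t) \<noteq> 0 \<and> extract_bits outside (2 ^ t) = 0" if "t \<in> J" for t
    using that finite_J by (simp add: extract_bits_exp_neq_0 extract_bits_exp_eq_0)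
  show "extract_bits inside (2 ^ t) = 0 \<and> extract_bits outside (2 ^ t) \<noteq> 0" if "t < n" "t \<notin> J" for t
    using that finite_J by (simp add: extract_bits_exp_neq_0 extract_bits_exp_eq_0)
  show "inj_on (\<lambda>t. extract_bits inside (2 ^ t)) J"
  proof (rule inj_onI)
    fix t t'
    assume "t \<in> J" "extract_bits inside (2 ^ t) = extract_bits inside (2 ^ t')"
    then show "t = t'"
      using extract_bits_exp_inj[of t inside t'] finite_J by simp
  qed
  show "inj_on (\<lambda>t. extract_bits outside (2 ^ t)) ({..<n} - J)"
    by (intro inj_onI) (auto dest!: extract_bits_exp_inj[rotated])
  show "(\<Sum>r<2 ^ card J. \<Sum>r'<2 ^ card J. (cmod (\<Sum>s<2 ^ (n - card J).
      \<psi> t $ spin.join r s * cnj (\<psi> t $ spin.join r' s)))\<^sup>2) \<le> P" if "t < n" for t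
    using assms(2)[OF that]
    by (simp add: spin.reduced_dm_eq_reduced spin.reduced_def purity_def card_outside)
qed (use J_subset assms(1) extract_bits_less[of inside] extract_bits_less[of outside] in
  \<open>auto simp: card_outside\<close>)

lemma purity_clock_state:
  assumes "\<And>t. t < n \<Longrightarrow> (cmod (c t))\<^sup>2 = 1 / n"
    and "\<And>t. t < n \<Longrightarrow> purity (reduced_dm n J (\<psi> t)) \<le> P"
  shows "purity (reduced_dm (2 * n) (J \<union> (\<lambda>j. n + j) ` J) (clock_state n c \<psi>))
    \<le> ((real (n - card J))\<^sup>2 + (real (card J))\<^sup>2) / (real n)\<^sup>2 * P"
proof -
  interpret cs: clock_superposition n J "\<lambda>t. extract_bits inside (2 ^ t)"
    "\<lambda>t. extract_bits outside (2 ^ t)" "2 ^ card J" "2 ^ (n - card J)" c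
    "\<lambda>t r s. \<psi> t $ spin.join r s" "2 ^ card J" "2 ^ (n - card J)" P
    using assms by (rule clock_superposition_clock_state)
  let ?L = "2 ^ card J" and ?M = "2 ^ (n - card J)"
  have "purity (reduced_dm (2 * n) (J \<union> (\<lambda>j. n + j) ` J) (clock_state n c \<psi>))
      = (\<Sum>r<?L * ?L. \<Sum>r'<?L * ?L. (cmod (\<Sum>s<?M * ?M.
          clock_state n c \<psi> $ full.join r s * cnj (clock_state n c \<psi> $ full.join r' s)))\<^sup>2)"
    unfolding full.reduced_dm_eq_reduced full.reduced_def purity_def
    by (simp add: card_full_inside card_full_outside power_add)
  also have "\<dots> = (\<Sum>r2<?L. \<Sum>r1<?L. \<Sum>r2'<?L. \<Sum>r1'<?L. (cmod (cs.\<rho> r1 r2 r1' r2'))\<^sup>2)"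
    unfolding cs.\<rho>_def cs.\<Psi>_def by (simp add: sum_lessThan_mult clock_state_full_join)
  also have "\<dots> = (\<Sum>r1<?L. \<Sum>r2<?L. \<Sum>r1'<?L. \<Sum>r2'<?L. (cmod (cs.\<rho> r1 r2 r1' r2'))\<^sup>2)"
    by (subst sum.swap) (rule sum.cong[OF refl], rule sum.cong[OF refl], rule sum.swap)
  also have "\<dots> = (\<Sum>r1<?L. \<Sum>r1'<?L. \<Sum>r2<?L. \<Sum>r2'<?L. (cmod (cs.\<rho> r1 r2 r1' r2'))\<^sup>2)"
    by (rule sum.cong[OF refl], rule sum.swap)
  also have "\<dots> \<le> ((real (n - card J))\<^sup>2 + (real (card J))\<^sup>2) / (real n)\<^sup>2 * P"
    by (rule cs.purity_\<rho>)
  finally show ?thesis .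
qed


end

section \<open>Unitary evolution and the final estimate\<close>

lemma cvnorm_unitary_mult:
  assumes U: "unitary_mat d U" and w: "dim_vec w = d"
  shows "cvnorm (U *\<^sub>v w) = cvnorm w"
proof -
  have Uc: "U \<in> carrier_mat d d" and UU: "cadj U * U = 1\<^sub>m d"
    using U by (auto simp: unitary_mat_def)
  have wc: "w \<in> carrier_vec d"
    using w by (rule carrier_vecI)
  have Uw: "(U *\<^sub>v w) $ i = (\<Sum>j<d. U $$ (i, j) * w $ j)" if "i < d" for i
    using that Uc w by (simp add: scalar_prod_def atLeast0LessThan)
  have "cadj U \<in> carrier_mat d d"
    using Uc by (simp add: cadj_def)
  then have "cadj U *\<^sub>v (U *\<^sub>v w) = (cadj U * U) *\<^sub>v w"
    using assoc_mult_mat_vec Uc wc by metis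
  also have "\<dots> = w"
    using UU wc by simp
  finally have "cadj U *\<^sub>v (U *\<^sub>v w) = w" .
  moreover have "(cadj U *\<^sub>v (U *\<^sub>v w)) $ j = (\<Sum>i<d. cnj (U $$ (i, j)) * (U *\<^sub>v w) $ i)"
    if "j < d" for j
    using that Uc by (simp add: cadj_def scalar_prod_def atLeast0LessThan)
  ultimately have cadj_action: "(\<Sum>i<d. cnj (U $$ (i, j)) * (U *\<^sub>v w) $ i) = w $ j" if "j < d" for j
    using that by simp
  have cnj_Uw: "cnj ((U *\<^sub>v w) $ i) = (\<Sum>j<d. cnj (U $$ (i, j)) * cnj (w $ j))" if "i < d" for i
    using that by (simp add: Uw cnj_sum)
  have "complex_of_real (\<Sum>i<d. (cmod ((U *\<^sub>v w) $ i))\<^sup>2)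
      = (\<Sum>i<d. \<Sum>j<d. cnj (w $ j) * (cnj (U $$ (i, j)) * (U *\<^sub>v w) $ i))"
    unfolding of_real_sum complex_norm_square
    by (intro sum.cong refl) (simp add: cnj_Uw sum_distrib_left mult_ac)
  also have "\<dots> = (\<Sum>j<d. cnj (w $ j) * (\<Sum>i<d. cnj (U $$ (i, j)) * (U *\<^sub>v w) $ i))"
    unfolding sum_distrib_left by (rule sum.swap)
  also have "\<dots> = (\<Sum>j<d. cnj (w $ j) * w $ j)"
    by (intro sum.cong refl) (simp add: cadj_action)
  also have "\<dots> = complex_of_real (\<Sum>j<d. (cmod (w $ j))\<^sup>2)"
    unfolding of_real_sum complex_norm_square by (simp add: mult.commute)
  finally show ?thesis
    using Uc w unfolding cvnorm_def of_real_eq_iff by simp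
qed



lemma Uprod_preserves_cvnorm:
  assumes unitary: "\<forall>t < T. unitary_mat d (u t)" and v: "dim_vec v = d" and t: "t \<le> T"
  shows "dim_vec (Uprod d u t *\<^sub>v v) = d" and "cvnorm (Uprod d u t *\<^sub>v v) = cvnorm v"
proof -
  have "Uprod d u t \<in> carrier_mat d d \<and> cvnorm (Uprod d u t *\<^sub>v v) = cvnorm v"
    using t
  proof (induction t)
    case 0
    have "1\<^sub>m d *\<^sub>v v = v"
      using v by (intro one_mult_mat_vec carrier_vecI)
    then show ?case
      by simp
  next
    case (Suc t)
    then have IH: "Uprod d u t \<in> carrier_mat d d" "cvnorm (Uprod d u t *\<^sub>v v) = cvnorm v"
      by simp_all
    have ut: "unitary_mat d (u t)"
      using unitary Suc.prems by simp
    then have utc: "u t \<in> carrier_mat d d"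
      by (simp add: unitary_mat_def)
    have "Uprod d u (Suc t) *\<^sub>v v = u t *\<^sub>v (Uprod d u t *\<^sub>v v)"
      unfolding Uprod.simps using utc IH(1) v by (intro assoc_mult_mat_vec carrier_vecI)
    moreover have "dim_vec (Uprod d u t *\<^sub>v v) = d"
      using IH(1) by simp
    ultimately show ?case
      using utc IH cvnorm_unitary_mult[OF ut] by simp
  qed
  then show "dim_vec (Uprod d u t *\<^sub>v v) = d" and "cvnorm (Uprod d u t *\<^sub>v v) = cvnorm v"
    by auto
qed

lemma inj_on_add_mod:
  fixes l n t :: nat
  assumes "l \<le> n"
  shows "inj_on (\<lambda>j. (t + j) mod n) {..<l}"
proof -
  have "j = j'" if "j \<le> j'" "j' < n" "(t + j) mod n = (t + j') mod n" for j j'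
  proof -
    have "n dvd (t + j') - (t + j)"
      using that by (subst mod_eq_dvd_iff_nat[symmetric]) auto
    then have "n dvd j' - j"
      by simp
    moreover have "j' - j < n"
      using that by simp
    ultimately have "j' - j = 0"
      by (metis dvd_imp_le neq0_conv not_le)
    then show ?thesis
      using that by simp
  qed
  then show ?thesis
    using assms by (intro inj_onI) (metis lessThan_iff nat_le_linear order_less_le_trans)
qed

lemma mixing_factor_le:
  fixes N L q :: real
  assumes "0 \<le> L" "2 * L \<le> N" "0 \<le> q" "q * N \<le> 2 * L"
  shows "((N - L)\<^sup>2 + L\<^sup>2) * (1 + q) \<le> N\<^sup>2"
proof -
  have S: "(N - L)\<^sup>2 + L\<^sup>2 = N\<^sup>2 - 2 * L * (N - L)"
    by (simp add: power2_eq_square algebra_simps)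
  have "L * (N - 2 * L) \<ge> 0"
    using assms by simp
  then have "(N - L)\<^sup>2 + L\<^sup>2 \<le> N * (N - L)"
    by (simp add: power2_eq_square algebra_simps)
  then have "q * ((N - L)\<^sup>2 + L\<^sup>2) \<le> q * N * (N - L)"
    using assms(3) by (simp add: mult_left_mono mult.assoc)
  also have "\<dots> \<le> 2 * L * (N - L)"
    using assms by (intro mult_right_mono) auto
  finally show ?thesis
    unfolding S by (simp add: algebra_simps)
qed

lemma neg_ln_purity_ge:
  fixes n l :: nat and C X :: real
  assumes n: "n > 0" and ell: "2 * l \<le> n" and C: "C \<ge> 0"
    and cond: "real l * ln 2 / (real n / 2) \<ge> C * 2 powr (- real n / 2) + C\<^sup>2 * 2 powr (real l - real n)"
    and X: "0 < X" "X \<le> ((real (n - l))\<^sup>2 + (real l)\<^sup>2) / (real n)\<^sup>2 * (1 / 2 ^ l + (C * 2 powr (- real n / 2))\<^sup>2)"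
  shows "- ln X \<ge> real l * ln 2"
proof -
  define q where "q = C\<^sup>2 * 2 powr (real l - real n)"
  have "(2 powr (- real n / 2))\<^sup>2 = 2 powr (- real n)"
    by (simp add: power2_eq_square flip: powr_add)
  then have "2 ^ l * (C * 2 powr (- real n / 2))\<^sup>2 = C\<^sup>2 * (2 powr real l * 2 powr (- real n))"
    by (simp add: power_mult_distrib powr_realpow)
  then have q_eq: "1 / 2 ^ l + (C * 2 powr (- real n / 2))\<^sup>2 = (1 + q) / 2 ^ l"
    by (simp add: q_def field_simps flip: powr_add)
  have "0 \<le> C * 2 powr (- real n / 2)"
    using C by simp
  then have "q \<le> real l * ln 2 / (real n / 2)"
    using cond by (simp add: q_def)
  also have "\<dots> \<le> real l * 1 / (real n / 2)"
    using ln_2_less_1 n by (intro divide_right_mono mult_left_mono) auto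
  finally have "q * n \<le> 2 * l"
    using n by (simp add: field_simps)
  then have "((real n - l)\<^sup>2 + (real l)\<^sup>2) * (1 + q) \<le> (real n)\<^sup>2"
    using ell by (intro mixing_factor_le) (auto simp: q_def)
  then have "((real n - l)\<^sup>2 + (real l)\<^sup>2) * (1 + q) / ((real n)\<^sup>2 * 2 ^ l)
      \<le> (real n)\<^sup>2 / ((real n)\<^sup>2 * 2 ^ l)"
    by (intro divide_right_mono) auto
  moreover have "X \<le> ((real n - l)\<^sup>2 + (real l)\<^sup>2) * (1 + q) / ((real n)\<^sup>2 * 2 ^ l)"
    using X(2) ell unfolding q_eq by (simp add: of_nat_diff)
  ultimately have "X \<le> 1 / 2 ^ l"
    using n by simp
  then have "ln X \<le> ln (1 / 2 ^ l)"
    using X(1) n by simp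
  then show ?thesis
    by (simp add: ln_div ln_realpow)
qed

context clock_cut
begin

lemma ent_entropy_clock_state_ge:
  fixes C :: real
  assumes n: "n > 0" and ell: "2 * card J \<le> n" and C: "C \<ge> 0"
    and cond: "real (card J) * ln 2 / (real n / 2)
      \<ge> C * 2 powr (- real n / 2) + C\<^sup>2 * 2 powr (real (card J) - real n)"
    and dim: "\<And>t. t < n \<Longrightarrow> dim_vec (\<psi> t) = 2 ^ n" and norm: "\<And>t. t < n \<Longrightarrow> cvnorm (\<psi> t) = 1"
    and c: "\<And>t. t < n \<Longrightarrow> (cmod (c t))\<^sup>2 = 1 / n"
    and eth: "\<And>t X. t < n \<Longrightarrow> supported_on n J X \<Longrightarrow> opnorm_le1 X \<Longrightarrow>
      cmod (cinner (\<psi> t) (X *\<^sub>v \<psi> t) - mtrace X / 2 ^ n) \<le> C * 2 powr (- real n / 2)"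
  shows "ent_entropy (2 * n) (J \<union> (\<lambda>j. n + j) ` J) (clock_state n c \<psi>) \<ge> card J * ln 2"
proof -
  have "purity (reduced_dm n J (\<psi> t)) \<le> 1 / 2 ^ card J + (C * 2 powr (- real n / 2))\<^sup>2"
    if "t < n" for t
    using spin.purity_reduced_dm_le[OF dim[OF that] norm[OF that] eth[OF that]] .
  with c have "purity (reduced_dm (2 * n) (J \<union> (\<lambda>j. n + j) ` J) (clock_state n c \<psi>))
      \<le> ((real (n - card J))\<^sup>2 + (real (card J))\<^sup>2) / (real n)\<^sup>2 * (1 / 2 ^ card J + (C * 2 powr (- real n / 2))\<^sup>2)"
    by (rule purity_clock_state)
  moreover have "cvnorm (clock_state n c \<psi>) = 1"
    using cvnorm_clock_state[OF n] dim norm c by simp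
  moreover have "dim_vec (clock_state n c \<psi>) = 2 ^ (2 * n)"
    by (simp add: clock_state_def)
  ultimately show ?thesis
    using full.ent_entropy_ge_neg_ln_purity full.purity_reduced_dm_pos
      neg_ln_purity_ge[OF n ell C cond] by (meson order_trans)
qed

end

theorem theorem1:
  fixes n l t1 :: nat and u :: "nat \<Rightarrow> complex mat" and c :: complex
    and v :: "complex vec" and ph C :: real
  assumes n2: "n \<ge> 2"
    and u_unit: "\<forall>t < n - 1. unitary_mat (2^n) (u t)"
    and u_loc: "\<forall>t < n - 1. supported_on n {t, t+1} (u t)"
    and u_last: "u (n - 1) = c \<cdot>\<^sub>m 1\<^sub>m (2^n)"
    and c_abs: "cmod c = 1"
    and v_dim: "dim_vec v = 2^n"
    and v_norm: "cvnorm v = 1"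
    and v_eig: "Uprod (2^n) u n *\<^sub>v v = cis ph \<cdot>\<^sub>v v"
    and t1: "t1 < n"
    and ell: "2 * l \<le> n"
    and C_nonneg: "C \<ge> 0"
    and ETH: "\<forall>t < n. \<forall>X. supported_on n ((\<lambda>j. (t1 + j) mod n) ` {..<l}) X \<and> opnorm_le1 X \<longrightarrow>
         cmod (cinner (Uprod (2^n) u t *\<^sub>v v) (X *\<^sub>v (Uprod (2^n) u t *\<^sub>v v))
               - mtrace X / 2^n) \<le> C * 2 powr (- real n / 2)"
    and cond: "real l * ln 2 / (real n / 2) \<ge> C * 2 powr (- real n / 2) + C\<^sup>2 * 2 powr (real l - real n)"
  shows "\<forall>m < n. ent_entropy (2*n)
           ((\<lambda>j. (t1 + j) mod n) ` {..<l} \<union> (\<lambda>j. n + (t1 + j) mod n) ` {..<l})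
           (Psi_state n u v (2 * pi * real m / real n) ph)
         \<ge> real l * ln 2"
proof (intro allI impI)
  fix m
  define J where "J = (\<lambda>j. (t1 + j) mod n) ` {..<l}"
  define \<psi> where "\<psi> t = Uprod (2 ^ n) u t *\<^sub>v v" for t
  define a where "a t = cis ((2 * pi * real m / real n - ph / real n) * real t)
    / complex_of_real (sqrt (real n))" for t
  have n: "n > 0"
    using n2 by simp
  interpret clock_cut n J
    using n by unfold_locales (auto simp: J_def)
  have card_J: "card J = l"
    using inj_on_add_mod[of l n t1] ell by (simp add: J_def card_image)
  have \<psi>: "dim_vec (\<psi> t) = 2 ^ n" "cvnorm (\<psi> t) = 1" if "t < n" for t
    using Uprod_preserves_cvnorm[OF u_unit v_dim, of t] that v_norm by (simp_all add: \<psi>_def)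
  have a: "(cmod (a t))\<^sup>2 = 1 / n" for t
    using n by (simp add: a_def norm_divide power_divide)
  have eth: "cmod (cinner (\<psi> t) (X *\<^sub>v \<psi> t) - mtrace X / 2 ^ n) \<le> C * 2 powr (- real n / 2)"
    if "t < n" "supported_on n J X" "opnorm_le1 X" for t X
    using ETH that unfolding J_def \<psi>_def by blast
  have "ent_entropy (2 * n) (J \<union> (\<lambda>j. n + j) ` J) (clock_state n a \<psi>) \<ge> l * ln 2"
    using ent_entropy_clock_state_ge[OF n _ C_nonneg _ \<psi> a eth] ell cond by (simp add: card_J)
  moreover have "Psi_state n u v (2 * pi * real m / real n) ph = clock_state n a \<psi>"
    by (simp add: Psi_state_eq_clock_state a_def[abs_def] \<psi>_def[abs_def])
  moreover have "(\<lambda>j. (t1 + j) mod n) ` {..<l} \<union> (\<lambda>j. n + (t1 + j) mod n) ` {..<l}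
      = J \<union> (\<lambda>j. n + j) ` J"
    by (simp add: J_def image_image)
  ultimately show "ent_entropy (2 * n)
      ((\<lambda>j. (t1 + j) mod n) ` {..<l} \<union> (\<lambda>j. n + (t1 + j) mod n) ` {..<l})
      (Psi_state n u v (2 * pi * real m / real n) ph) \<ge> real l * ln 2"
    by simp
qed

end
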